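(* For every $p,q,r\in(0,\infty)$ and $\Phi,K\ge1$ there exist constants $C=C(p,q,r,\Phi,K)$ and $c=c(p,q,r,\Phi,K)$ such that the following holds. Let $X$ be a finite set, $\mu,\nu$ outer measures, $\omega$ a measure, and $\mathcal C$ a $\mu$-covering function such that $(X,\mu,\nu,\mathcal C)$ satisfies the canopy condition with parameters $\Phi,K$. For every $f\in L^p_\mu(\ell^q_\nu(\ell^r_\omega))$ on $X$ there exists a collection $\{E_k:k\in\mathbb Z\}$ of pairwise disjoint subsets of $X$ such that, setting $F_k=\mathbf B_{\mathcal C}(\bigcup_{l\ge k}E_l)$, for every $k\in\mathbb Z$: (a) if $E_k\ne\varnothing$, then $\ell^q_\nu(\ell^r_\omega)(f1_{X\setminus F_{k+1}})(E_k)>c2^k$; (b) $\|f1_{X\setminus F_k}\|_{L^\infty_\mu(\ell^q_\nu(\ell^r_\omega))}\le2^k$; (c) $\mu(\ell^q_\nu(\ell^r_\omega)(f)>2^k)\le\mu(F_k)$; (d) $\mu(E_k)\le C\mu(\ell^q_\nu(\ell^r_\omega)(f)>c2^k)$. In particular, there is a constant $C'=C'(p,q,r,\Phi,K)$ with $$C'^{-1}\|f\|^p_{L^p_\mu(\ell^q_\nu(\ell^r_\omega))}\le\sum_{k\in\mathbb Z}2^{kp}\mu(E_k)\le C'\|f\|^p_{L^p_\mu(\ell^q_\nu(\ell^r_\omega))}$$ and the same two-sided bound holds with $\sum_{k}2^{kp}\mu(E_k)$ replaced by $\sum_{k\in\mathbb Z}2^{kp}\sum_{l\ge k}\mu(E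_l)$.
   Context: An outer measure on $X$ is a monotone, subadditive function $\mathcal P(X)\to[0,\infty]$ vanishing on $\varnothing$; standing assumption: outer measures are finite and strictly positive on nonempty subsets; $\omega$ is given by a finite strictly positive weight. Quasi-norms: for nonempty $A$, $\ell^r_\omega(f)(A)=\nu(A)^{-1/r}\|f1_A\|_{L^r(X,\omega)}$; $\|f\|_{L^\infty_\nu(\ell^r_\omega)}=\sup_{\varnothing\ne A}\ell^r_\omega(f)(A)$; $\nu(\ell^r_\omega(f)>\lambda)=\inf\{\nu(B):\|f1_{X\setminus B}\|_{L^\infty_\nu(\ell^r_\omega)}\le\lambda\}$; $\|f\|_{L^q_\nu(\ell^r_\omega)}=(\int_0^\infty q\lambda^{q-1}\nu(\ell^r_\omega(f)>\lambda)d\lambda)^{1/q}$; $\ell^q_\nu(\ell^r_\omega)(f)(A)=\mu(A)^{-1/q}\|f1_A\|_{L^q_\nu(\ell^r_\omega)}$; $\|f\|_{L^\infty_\mu(\ell^q_\nu(\ell^r_\omega))}=\sup_{\varnothing\ne A}\ell^q_\nu(\ell^r_\omega)(f)(A)$; $\mu(\ell^q_\nu(\ell^r_\omega)(f)>\lambda)=\inf\{\mu(B):\|f1_{X\setminus B}\|_{L^\infty_\mu(\ell^q_\nu(\ell^r_\omega))}\le\lambda\}$; $\|f\|_{L^p_\mu(\ell^q_\nu(\ell^r_\omega))}=(\int_0^\infty p\lambda^{p-1}\mu(\ell^q_\nu(\ell^r_\omega)(f)>\lambda)d\lambda)^{1/p}$. A $\mu$-covering function with parameter $\Phi$ is, for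 a collection $\mathcal E$ of subsets of $X$, a map $\mathcal C$ assigning to each $A\subseteq X$ a subcollection $\mathcal C(A)\subseteq\mathcal E$ of pairwise disjoint sets such that $\mathbf B_{\mathcal C}(A)=\bigcup_{E\in\mathcal C(A)}E$ satisfies $A\subseteq\mathbf B_{\mathcal C}(A)$, $\mu(\mathbf B_{\mathcal C}(A))\le\Phi\mu(A)$, and is monotone in $A$. A collection $\mathcal A$ of pairwise disjoint subsets is $\nu$-Carathéodory (parameter $K$) if $\sum_{A\in\mathcal A}\nu(U\cap A)\le K\nu(U\cap\bigcup\mathcal A)$ for all $U\subseteq X$. Canopy condition (parameters $\Phi,K$): $\mathcal C$ is a $\mu$-covering function with parameter $\Phi$, and for every $\nu$-Carathéodory collection $\mathcal A$ (parameter $K$) and every $D\subseteq X$ disjoint from $\mathbf B_{\mathcal C}(\bigcup_{A\in\mathcal A}A)$, the collection $\mathcal A\cup\{D\}$ is $\nu$-Carathéodory (parameter $K$). *)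

theory Defs
  imports "HOL-Analysis.Analysis"
begin

definition restr :: "'a set \<Rightarrow> ('a \<Rightarrow> complex) \<Rightarrow> 'a \<Rightarrow> complex" where
  "restr A f = (\<lambda>x. if x \<in> A then f x else 0)"

definition outer_measure :: "'a set \<Rightarrow> ('a set \<Rightarrow> real) \<Rightarrow> bool" where
  "outer_measure X m \<longleftrightarrow>
     m {} = 0
   \<and> (\<forall>A B. A \<subseteq> B \<and> B \<subseteq> X \<longrightarrow> m A \<le> m B)
   \<and> (\<forall>A B. A \<subseteq> X \<and> B \<subseteq> X \<longrightarrow> m (A \<union> B) \<le> m A + m B)
   \<and> (\<forall>A. A \<subseteq> X \<and> A \<noteq> {} \<longrightarrow> 0 < m A)"

text \<open>The L^r(X,omega) norm for the weight w.\<close>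
definition Lr_norm :: "'a set \<Rightarrow> ('a \<Rightarrow> real) \<Rightarrow> real \<Rightarrow> ('a \<Rightarrow> complex) \<Rightarrow> real" where
  "Lr_norm X w r f = (\<Sum>x\<in>X. w x * cmod (f x) powr r) powr (1 / r)"

definition loc_size :: "('a set \<Rightarrow> real) \<Rightarrow> real \<Rightarrow> (('a \<Rightarrow> complex) \<Rightarrow> real)
    \<Rightarrow> ('a \<Rightarrow> complex) \<Rightarrow> 'a set \<Rightarrow> real" where
  "loc_size m t S f A = m A powr (- 1 / t) * S (restr A f)"

definition Linf_norm :: "'a set \<Rightarrow> ('a set \<Rightarrow> real) \<Rightarrow> real \<Rightarrow> (('a \<Rightarrow> complex) \<Rightarrow> real)
    \<Rightarrow> ('a \<Rightarrow> complex) \<Rightarrow> real" where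
  "Linf_norm X m t S f = Sup (insert 0 (loc_size m t S f ` {A. A \<subseteq> X \<and> A \<noteq> {}}))"

text \<open>Super level measure m(size(f) > lambda).\<close>
definition super_level :: "'a set \<Rightarrow> ('a set \<Rightarrow> real) \<Rightarrow> real \<Rightarrow> (('a \<Rightarrow> complex) \<Rightarrow> real)
    \<Rightarrow> ('a \<Rightarrow> complex) \<Rightarrow> real \<Rightarrow> real" where
  "super_level X m t S f lam =
     Inf {m B | B. B \<subseteq> X \<and> Linf_norm X m t S (restr (X - B) f) \<le> lam}"

definition Lout_norm :: "'a set \<Rightarrow> ('a set \<Rightarrow> real) \<Rightarrow> real \<Rightarrow> real \<Rightarrow> (('a \<Rightarrow> complex) \<Rightarrow> real)
    \<Rightarrow> ('a \<Rightarrow> complex) \<Rightarrow> real" where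
  "Lout_norm X m t s S f =
     (set_lebesgue_integral lborel {0<..}
        (\<lambda>lam. s * lam powr (s - 1) * super_level X m t S f lam)) powr (1 / s)"

definition cover_union :: "('a set \<Rightarrow> 'a set set) \<Rightarrow> 'a set \<Rightarrow> 'a set" where
  "cover_union C A = \<Union> (C A)"

definition covering_function :: "'a set \<Rightarrow> ('a set \<Rightarrow> real) \<Rightarrow> real \<Rightarrow> 'a set set
    \<Rightarrow> ('a set \<Rightarrow> 'a set set) \<Rightarrow> bool" where
  "covering_function X m \<Phi> \<E> C \<longleftrightarrow>
     \<E> \<subseteq> Pow X
   \<and> (\<forall>A. A \<subseteq> X \<longrightarrow> C A \<subseteq> \<E> \<and> pairwise disjnt (C A)
          \<and> A \<subseteq> cover_union C A \<and> m (cover_union C A) \<le> \<Phi> * m A)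
   \<and> (\<forall>A A'. A \<subseteq> A' \<and> A' \<subseteq> X \<longrightarrow> cover_union C A \<subseteq> cover_union C A')"

definition caratheodory :: "'a set \<Rightarrow> ('a set \<Rightarrow> real) \<Rightarrow> real \<Rightarrow> 'a set set \<Rightarrow> bool" where
  "caratheodory X m K \<A> \<longleftrightarrow>
     \<A> \<subseteq> Pow X \<and> pairwise disjnt \<A>
   \<and> (\<forall>U. U \<subseteq> X \<longrightarrow> (\<Sum>A\<in>\<A>. m (U \<inter> A)) \<le> K * m (U \<inter> \<Union>\<A>))"

definition canopy :: "'a set \<Rightarrow> ('a set \<Rightarrow> real) \<Rightarrow> ('a set \<Rightarrow> real) \<Rightarrow> real \<Rightarrow> real
    \<Rightarrow> 'a set set \<Rightarrow> ('a set \<Rightarrow> 'a set set) \<Rightarrow> bool" where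
  "canopy X \<mu> \<nu> \<Phi> K \<E> C \<longleftrightarrow>
     covering_function X \<mu> \<Phi> \<E> C
   \<and> (\<forall>\<A> D. caratheodory X \<nu> K \<A> \<and> D \<subseteq> X \<and> D \<inter> cover_union C (\<Union>\<A>) = {}
          \<longrightarrow> caratheodory X \<nu> K (insert D \<A>))"

end

theory Submission
  imports Defs
begin

text \<open>The sets \<open>E\<^sub>k\<close> are chosen greedily from the top scale downwards. At scale \<open>2\<^sup>k\<close> take a
  \<open>\<nu>\<close>-Caratheodory family of sets, disjoint from the canopy of the sets already chosen, on each
  of which \<open>f\<close> has local size \<open>> 2\<^sup>k\<close>, with union of maximal cardinality; \<open>E\<^sub>k\<close> is that union.
  If a set outside the new canopy still had local size \<open>> 2\<^sup>k\<close>, the canopy condition would let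
  it join the family, contradicting maximality: this is (b), and (c) follows. The Caratheodory
  property makes the \<open>q\<close>-th powers of local sizes superadditive over the family, which gives (a)
  and, together with the quasi-triangle inequality of \<open>L\<^sup>q\<^sub>\<nu>(\<ell>\<^sup>r\<^sub>\<omega>)\<close>, also (d). Finally (c) and (d)
  squeeze the layer-cake integral \<open>\<integral> p \<lambda>\<^sup>p\<^sup>-\<^sup>1 \<mu>(\<ell>(f) > \<lambda>) d\<lambda>\<close> between multiples of
  \<open>\<Sum>\<^sub>k 2\<^sup>k\<^sup>p \<mu>(E\<^sub>k)\<close>.\<close>

section \<open>Layer-cake integrals\<close>

definition layer_integrable :: "real \<Rightarrow> (real \<Rightarrow> real) \<Rightarrow> bool" where
  "layer_integrable s \<phi> \<longleftrightarrow> set_integrable lborel {0<..} (\<lambda>x. s * x powr (s - 1) * \<phi> x)"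

definition layer_integral :: "real \<Rightarrow> (real \<Rightarrow> real) \<Rightarrow> real" where
  "layer_integral s \<phi> = set_lebesgue_integral lborel {0<..} (\<lambda>x. s * x powr (s - 1) * \<phi> x)"

text \<open>The shape of every super level function \<open>\<lambda> \<mapsto> m(size(f) > \<lambda>)\<close> on a finite space.\<close>

definition antitone_cutoff :: "(real \<Rightarrow> real) \<Rightarrow> bool" where
  "antitone_cutoff \<phi> \<longleftrightarrow> (\<exists>M T. 0 < T \<and> (\<forall>x>0. 0 \<le> \<phi> x \<and> \<phi> x \<le> M)
      \<and> (\<forall>x y. 0 < x \<longrightarrow> x \<le> y \<longrightarrow> \<phi> y \<le> \<phi> x) \<and> (\<forall>x\<ge>T. \<phi> x = 0))"

lemma set_integral_powr_derivative:
  fixes a b s :: real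
  assumes "0 \<le> a" "a < b" "0 < s"
  shows "set_integrable lborel {a<..<b} (\<lambda>x. s * x powr (s - 1))"
    and "set_lebesgue_integral lborel {a<..<b} (\<lambda>x. s * x powr (s - 1)) = b powr s - a powr s"
proof -
  have lim_a: "((\<lambda>x. x powr s) \<longlongrightarrow> a powr s) (at_right a)"
  proof (cases "a = 0")
    case True
    have "((\<lambda>x. x powr s) \<longlongrightarrow> 0) (at_right 0)"
      by (rule tendsto_zero_powrI) (auto simp: assms eventually_at_right_less eventually_at_filter)
    then show ?thesis using True assms by simp
  next
    case False
    then show ?thesis using assms by (auto intro!: tendsto_eq_intros)
  qed
  have lim_b: "((\<lambda>x. x powr s) \<longlongrightarrow> b powr s) (at_left b)"
    using assms by (auto intro!: tendsto_eq_intros)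
  have deriv: "DERIV (\<lambda>x. x powr s) x :> s * x powr (s - 1)" if "a < x" for x
    using that assms by (auto intro!: derivative_eq_intros)
  have cont: "isCont (\<lambda>x. s * x powr (s - 1)) x" if "a < x" for x
    using that assms by (auto intro!: continuous_intros)
  have nonneg: "AE x in lborel. ereal a < ereal x \<longrightarrow> ereal x < ereal b \<longrightarrow> 0 \<le> s * x powr (s - 1)"
    using assms by auto
  have FTC: "set_integrable lborel (einterval (ereal a) (ereal b)) (\<lambda>x. s * x powr (s - 1))"
     "(LBINT x=ereal a..ereal b. s * x powr (s - 1)) = b powr s - a powr s"
    using interval_integral_FTC_nonneg[OF _ deriv cont nonneg] assms lim_a lim_b
    by (auto simp: ereal_tendsto_simps)
  show "set_integrable lborel {a<..<b} (\<lambda>x. s * x powr (s - 1))"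
    using FTC by simp
  show "set_lebesgue_integral lborel {a<..<b} (\<lambda>x. s * x powr (s - 1)) = b powr s - a powr s"
    using FTC assms by (simp add: interval_lebesgue_integral_def)
qed

lemma layer_integral_cong:
  assumes "\<And>x. 0 < x \<Longrightarrow> \<phi> x = \<psi> x"
  shows "layer_integrable s \<phi> = layer_integrable s \<psi>" "layer_integral s \<phi> = layer_integral s \<psi>"
  unfolding layer_integrable_def layer_integral_def
  by (intro set_integrable_cong set_lebesgue_integral_cong refl; simp add: assms)+

lemma layer_integrable_add: "layer_integrable s \<phi> \<Longrightarrow> layer_integrable s \<psi> \<Longrightarrow>
    layer_integrable s (\<lambda>x. \<phi> x + \<psi> x)"
  and layer_integral_add: "layer_integrable s \<phi> \<Longrightarrow> layer_integrable s \<psi> \<Longrightarrow>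
    layer_integral s (\<lambda>x. \<phi> x + \<psi> x) = layer_integral s \<phi> + layer_integral s \<psi>"
proof -
  assume "layer_integrable s \<phi>" "layer_integrable s \<psi>"
  moreover have "(\<lambda>x. s * x powr (s - 1) * (\<phi> x + \<psi> x))
      = (\<lambda>x. s * x powr (s - 1) * \<phi> x + s * x powr (s - 1) * \<psi> x)"
    by (auto simp: algebra_simps)
  ultimately show "layer_integrable s (\<lambda>x. \<phi> x + \<psi> x)"
    and "layer_integral s (\<lambda>x. \<phi> x + \<psi> x) = layer_integral s \<phi> + layer_integral s \<psi>"
    unfolding layer_integrable_def layer_integral_def by (simp_all add: set_integral_add)
qed

lemma layer_integrable_cmult: "layer_integrable s \<phi> \<Longrightarrow> layer_integrable s (\<lambda>x. c * \<phi> x)"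
  and layer_integral_cmult: "layer_integrable s \<phi> \<Longrightarrow>
    layer_integral s (\<lambda>x. c * \<phi> x) = c * layer_integral s \<phi>"
proof -
  assume "layer_integrable s \<phi>"
  moreover have "(\<lambda>x. s * x powr (s - 1) * (c * \<phi> x)) = (\<lambda>x. c * (s * x powr (s - 1) * \<phi> x))"
    by (auto simp: algebra_simps)
  ultimately show "layer_integrable s (\<lambda>x. c * \<phi> x)"
    and "layer_integral s (\<lambda>x. c * \<phi> x) = c * layer_integral s \<phi>"
    unfolding layer_integrable_def layer_integral_def by simp_all
qed

lemma layer_integrable_sum: "finite I \<Longrightarrow> (\<And>i. i \<in> I \<Longrightarrow> layer_integrable s (\<phi> i)) \<Longrightarrow>
    layer_integrable s (\<lambda>x. \<Sum>i\<in>I. \<phi> i x)"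
  and layer_integral_sum: "finite I \<Longrightarrow> (\<And>i. i \<in> I \<Longrightarrow> layer_integrable s (\<phi> i)) \<Longrightarrow>
    layer_integral s (\<lambda>x. \<Sum>i\<in>I. \<phi> i x) = (\<Sum>i\<in>I. layer_integral s (\<phi> i))"
proof -
  assume "finite I" "\<And>i. i \<in> I \<Longrightarrow> layer_integrable s (\<phi> i)"
  then have "layer_integrable s (\<lambda>x. \<Sum>i\<in>I. \<phi> i x)
      \<and> layer_integral s (\<lambda>x. \<Sum>i\<in>I. \<phi> i x) = (\<Sum>i\<in>I. layer_integral s (\<phi> i))"
  proof (induction I rule: finite_induct)
    case empty
    then show ?case by (simp add: layer_integrable_def layer_integral_def set_integrable_def)
  next
    case (insert i I)
    then show ?case by (simp add: layer_integrable_add layer_integral_add)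
  qed
  then show "layer_integrable s (\<lambda>x. \<Sum>i\<in>I. \<phi> i x)"
    and "layer_integral s (\<lambda>x. \<Sum>i\<in>I. \<phi> i x) = (\<Sum>i\<in>I. layer_integral s (\<phi> i))"
    by auto
qed

lemma layer_integral_mono:
  assumes "layer_integrable s \<phi>" "layer_integrable s \<psi>" "0 < s" "\<And>x. 0 < x \<Longrightarrow> \<phi> x \<le> \<psi> x"
  shows "layer_integral s \<phi> \<le> layer_integral s \<psi>"
  using assms unfolding layer_integral_def layer_integrable_def
  by (intro set_integral_mono) (auto intro!: mult_left_mono)

lemma layer_integral_nonneg:
  assumes "0 < s" "\<And>x. 0 < x \<Longrightarrow> 0 \<le> \<phi> x"
  shows "0 \<le> layer_integral s \<phi>"
  unfolding layer_integral_def set_lebesgue_integral_def using assms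
  by (intro Bochner_Integration.integral_nonneg_AE AE_I2) (auto simp: indicator_def)

lemma layer_integral_indicator:
  assumes "0 \<le> a" "a < b" "0 < s"
  shows "layer_integrable s (\<lambda>x. c * indicator {a<..<b} x)"
    and "layer_integral s (\<lambda>x. c * indicator {a<..<b} x) = c * (b powr s - a powr s)"
proof -
  have eq: "(\<lambda>x. indicator {0<..} x *\<^sub>R (s * x powr (s - 1) * indicator {a<..<b} x))
      = (\<lambda>x. indicator {a<..<b} x *\<^sub>R (s * x powr (s - 1)))"
    using assms by (auto simp: indicator_def fun_eq_iff)
  have "layer_integrable s (indicator {a<..<b})"
    using set_integral_powr_derivative(1)[OF assms]
    unfolding layer_integrable_def set_integrable_def eq by simp
  moreover have "layer_integral s (indicator {a<..<b}) = b powr s - a powr s"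
    using set_integral_powr_derivative(2)[OF assms]
    unfolding layer_integral_def set_lebesgue_integral_def eq by simp
  ultimately show "layer_integrable s (\<lambda>x. c * indicator {a<..<b} x)"
    and "layer_integral s (\<lambda>x. c * indicator {a<..<b} x) = c * (b powr s - a powr s)"
    by (simp_all add: layer_integrable_cmult layer_integral_cmult)
qed

lemma layer_integrable_antitone_cutoff:
  assumes "0 < s" "antitone_cutoff \<phi>"
  shows "layer_integrable s \<phi>"
proof -
  obtain M T where MT: "0 < T" "\<And>x. 0 < x \<Longrightarrow> 0 \<le> \<phi> x \<and> \<phi> x \<le> M"
    "\<And>x y. 0 < x \<Longrightarrow> x \<le> y \<Longrightarrow> \<phi> y \<le> \<phi> x" "\<And>x. x \<ge> T \<Longrightarrow> \<phi> x = 0"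
    using assms(2) unfolding antitone_cutoff_def by blast
  \<comment> \<open>an antitone extension of \<open>\<phi>\<close> to all of \<open>\<real>\<close>, hence Borel measurable\<close>
  define \<psi> where "\<psi> x = (if 0 < x then \<phi> x else M)" for x
  have "mono (\<lambda>x. - \<psi> x)"
    unfolding mono_def \<psi>_def using MT by (auto simp: not_less)
  then have "(\<lambda>x. - (- \<psi> x)) \<in> borel_measurable borel"
    by (intro borel_measurable_uminus borel_measurable_mono)
  then have \<psi>_meas: "\<psi> \<in> borel_measurable borel"
    by simp
  have bound: "set_integrable lborel {0<..<T} (\<lambda>x. M * (s * x powr (s - 1)))"
    using set_integral_powr_derivative(1)[OF order.refl MT(1) assms(1)] by simp
  have "integrable lborel (\<lambda>x. indicator {0<..} x *\<^sub>R (s * x powr (s - 1) * \<psi> x))"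
  proof (rule Bochner_Integration.integrable_bound)
    show "integrable lborel (\<lambda>x. indicator {0<..<T} x *\<^sub>R (M * (s * x powr (s - 1))))"
      using bound unfolding set_integrable_def .
    show "(\<lambda>x. indicator {0<..} x *\<^sub>R (s * x powr (s - 1) * \<psi> x)) \<in> borel_measurable lborel"
      using \<psi>_meas by measurable
    have "norm (indicator {0<..} x *\<^sub>R (s * x powr (s - 1) * \<psi> x))
        \<le> norm (indicator {0<..<T} x *\<^sub>R (M * (s * x powr (s - 1))))" for x :: real
    proof (cases "0 < x \<and> x < T")
      case True
      then show ?thesis using MT(2)[of x] assms(1)
        by (simp add: \<psi>_def abs_mult mult_left_mono mult.commute mult.left_commute)
    next
      case False
      then show ?thesis using MT(4)[of x] by (auto simp: \<psi>_def)
    qed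
    then show "AE x in lborel. norm (indicator {0<..} x *\<^sub>R (s * x powr (s - 1) * \<psi> x))
        \<le> norm (indicator {0<..<T} x *\<^sub>R (M * (s * x powr (s - 1))))"
      by simp
  qed
  moreover have "layer_integrable s \<phi> = layer_integrable s \<psi>"
    by (rule layer_integral_cong) (simp add: \<psi>_def)
  ultimately show ?thesis
    unfolding layer_integrable_def set_integrable_def by simp
qed

lemma antitone_cutoff_scale:
  assumes "antitone_cutoff \<phi>" "0 < \<sigma>"
  shows "antitone_cutoff (\<lambda>x. \<phi> (x / \<sigma>))"
proof -
  obtain M T where "0 < T" "\<forall>x>0. 0 \<le> \<phi> x \<and> \<phi> x \<le> M"
      "\<forall>x y. 0 < x \<longrightarrow> x \<le> y \<longrightarrow> \<phi> y \<le> \<phi> x" "\<forall>x\<ge>T. \<phi> x = 0"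
    using assms(1) unfolding antitone_cutoff_def by metis
  then show ?thesis
    unfolding antitone_cutoff_def using \<open>0 < \<sigma>\<close>
    by (intro exI[of _ M] exI[of _ "T * \<sigma>"]) (auto simp: divide_right_mono pos_le_divide_eq)
qed

lemma layer_integral_scale:
  assumes "0 < s" "0 < \<sigma>"
  shows "layer_integral s (\<lambda>x. \<phi> (x / \<sigma>)) = \<sigma> powr s * layer_integral s \<phi>"
proof -
  let ?f = "\<lambda>x. indicator {0<..} x *\<^sub>R (s * x powr (s - 1) * \<phi> (x / \<sigma>))"
  let ?g = "\<lambda>x. indicator {0<..} x *\<^sub>R (s * x powr (s - 1) * \<phi> x)"
  have "integral\<^sup>L lborel ?f = \<bar>\<sigma>\<bar> *\<^sub>R integral\<^sup>L lborel (\<lambda>x. ?f (0 + \<sigma> * x))"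
    using assms by (intro lborel_integral_real_affine) auto
  also have "\<dots> = integral\<^sup>L lborel (\<lambda>x. \<sigma> * ?f (\<sigma> * x))"
    using assms by simp
  also have "(\<lambda>x. \<sigma> * ?f (\<sigma> * x)) = (\<lambda>x. \<sigma> powr s * ?g x)"
  proof
    fix x :: real
    show "\<sigma> * ?f (\<sigma> * x) = \<sigma> powr s * ?g x"
    proof (cases "0 < x")
      case True
      then have "\<sigma> * (\<sigma> * x) powr (s - 1) = \<sigma> powr s * x powr (s - 1)"
        using assms by (simp add: powr_mult powr_diff)
      then show ?thesis
        using True assms by (simp add: zero_less_mult_iff)
    qed (use assms in \<open>simp add: zero_less_mult_iff\<close>)
  qed
  also have "integral\<^sup>L lborel (\<lambda>x. \<sigma> powr s * ?g x) = \<sigma> powr s * integral\<^sup>L lborel ?g"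
    by simp
  finally show ?thesis
    unfolding layer_integral_def set_lebesgue_integral_def .
qed

section \<open>Local sizes, supremum norms and super level measures\<close>

lemma restr_restr: "restr A (restr B h) = restr (A \<inter> B) h"
  by (auto simp: restr_def fun_eq_iff)

lemma restr_empty: "restr {} h = (\<lambda>_. 0)"
  by (auto simp: restr_def fun_eq_iff)

lemma restr_zero: "restr A (\<lambda>_. 0) = (\<lambda>_. 0)"
  by (auto simp: restr_def fun_eq_iff)

text \<open>\<open>S\<close> is the global size measured on a set: the \<open>L\<^sup>r(\<omega>)\<close> norm with \<open>m = \<nu>\<close>, and later the
  outer \<open>L\<^sup>q\<^sub>\<nu>(\<ell>\<^sup>r\<^sub>\<omega>)\<close> norm with \<open>m = \<mu>\<close>.\<close>

locale outer_size =
  fixes X :: "'a set" and m :: "'a set \<Rightarrow> real" and t :: real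
    and S :: "('a \<Rightarrow> complex) \<Rightarrow> real"
  assumes finite_X: "finite X" and outer: "outer_measure X m" and t_pos: "0 < t"
    and S_nonneg: "\<And>h. 0 \<le> S h" and S_zero: "S (\<lambda>_. 0) = 0"
    and S_restr_mono: "\<And>h C D. C \<subseteq> D \<Longrightarrow> D \<subseteq> X \<Longrightarrow> S (restr C h) \<le> S (restr D h)"
begin

abbreviation "lsize \<equiv> loc_size m t S"
abbreviation "Linf \<equiv> Linf_norm X m t S"
abbreviation "level \<equiv> super_level X m t S"

lemma meas_empty: "m {} = 0"
  using outer unfolding outer_measure_def by auto

lemma meas_mono: "A \<subseteq> B \<Longrightarrow> B \<subseteq> X \<Longrightarrow> m A \<le> m B"
  using outer unfolding outer_measure_def by auto

lemma meas_nonneg: "A \<subseteq> X \<Longrightarrow> 0 \<le> m A"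
  using meas_mono[of "{}" A] meas_empty by auto

lemma meas_pos: "A \<subseteq> X \<Longrightarrow> A \<noteq> {} \<Longrightarrow> 0 < m A"
  using outer unfolding outer_measure_def by auto

lemma meas_Un_le: "A \<subseteq> X \<Longrightarrow> B \<subseteq> X \<Longrightarrow> m (A \<union> B) \<le> m A + m B"
  using outer unfolding outer_measure_def by auto

lemma meas_UN_le: "finite I \<Longrightarrow> (\<Union>i\<in>I. E i) \<subseteq> X \<Longrightarrow> m (\<Union>i\<in>I. E i) \<le> (\<Sum>i\<in>I. m (E i))"
proof (induction I rule: finite_induct)
  case empty
  then show ?case by (simp add: meas_empty)
next
  case (insert i I)
  then have "m (E i \<union> (\<Union>j\<in>I. E j)) \<le> m (E i) + m (\<Union>j\<in>I. E j)"
    by (intro meas_Un_le) auto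
  then show ?case using insert by auto
qed

lemma meas_Union_le: "finite \<A> \<Longrightarrow> \<Union>\<A> \<subseteq> X \<Longrightarrow> m (\<Union>\<A>) \<le> (\<Sum>A\<in>\<A>. m A)"
  using meas_UN_le[of \<A> "\<lambda>A. A"] by simp

lemma lsize_eq: "lsize h A = m A powr (- 1 / t) * S (restr A h)"
  by (simp add: loc_size_def)

lemma lsize_nonneg: "0 \<le> lsize h A"
  by (simp add: lsize_eq S_nonneg)

lemma lsize_powr:
  assumes "A \<subseteq> X" "A \<noteq> {}"
  shows "lsize h A powr t = S (restr A h) powr t / m A"
proof -
  have "lsize h A powr t = (m A powr (- 1 / t)) powr t * S (restr A h) powr t"
    by (simp add: lsize_eq powr_mult S_nonneg)
  also have "(m A powr (- 1 / t)) powr t = m A powr (-1)"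
    using t_pos by (simp add: powr_powr)
  finally show ?thesis
    using meas_pos[OF assms] by (simp add: powr_minus divide_inverse)
qed

lemma lsize_le_iff:
  assumes "A \<subseteq> X" "A \<noteq> {}" "0 \<le> a"
  shows "lsize h A \<le> a \<longleftrightarrow> S (restr A h) powr t \<le> a powr t * m A"
proof -
  have "lsize h A \<le> a \<longleftrightarrow> lsize h A powr t \<le> a powr t"
    using t_pos lsize_nonneg assms(3)
    by (meson linorder_not_le powr_less_mono2 powr_mono2 less_imp_le)
  also have "\<dots> \<longleftrightarrow> S (restr A h) powr t \<le> a powr t * m A"
    using meas_pos[OF assms(1,2)] by (simp add: lsize_powr[OF assms(1,2)] pos_divide_le_eq)
  finally show ?thesis .
qed

lemma lsize_gt_iff:
  assumes "A \<subseteq> X" "A \<noteq> {}" "0 \<le> a"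
  shows "a < lsize h A \<longleftrightarrow> a powr t * m A < S (restr A h) powr t"
  using lsize_le_iff[OF assms, of h] by auto

lemma Linf_eq: "Linf h = Sup (insert 0 (lsize h ` {A. A \<subseteq> X \<and> A \<noteq> {}}))"
  by (simp add: Linf_norm_def)

lemma finite_nonempty_subsets: "finite {A. A \<subseteq> X \<and> A \<noteq> {}}"
  using finite_X by (rule finite_subset[rotated, OF finite_Pow_iff[THEN iffD2]]) auto

lemma Linf_nonneg: "0 \<le> Linf h"
  unfolding Linf_eq using finite_nonempty_subsets by (intro cSup_upper) auto

lemma lsize_le_Linf: "A \<subseteq> X \<Longrightarrow> A \<noteq> {} \<Longrightarrow> lsize h A \<le> Linf h"
  unfolding Linf_eq using finite_nonempty_subsets by (intro cSup_upper) auto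

lemma Linf_leI: "0 \<le> a \<Longrightarrow> (\<And>A. A \<subseteq> X \<Longrightarrow> A \<noteq> {} \<Longrightarrow> lsize h A \<le> a) \<Longrightarrow> Linf h \<le> a"
  unfolding Linf_eq by (intro cSup_least) auto

lemma Linf_zero: "Linf (\<lambda>_. 0) = 0"
  using Linf_nonneg[of "\<lambda>_. 0"] Linf_leI[of 0 "\<lambda>_. 0"]
  by (simp add: lsize_eq restr_zero S_zero)

lemma lsize_restr_mono: "C \<subseteq> D \<Longrightarrow> A \<subseteq> X \<Longrightarrow> lsize (restr C h) A \<le> lsize (restr D h) A"
  unfolding lsize_eq restr_restr by (intro mult_left_mono S_restr_mono) auto

lemma Linf_restr_mono: "C \<subseteq> D \<Longrightarrow> Linf (restr C h) \<le> Linf (restr D h)"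
  by (intro Linf_leI Linf_nonneg order.trans[OF lsize_restr_mono lsize_le_Linf]) auto

lemma Linf_restr_le: "Linf (restr C h) \<le> Linf h"
proof (intro Linf_leI Linf_nonneg)
  fix A assume "A \<subseteq> X" "A \<noteq> {}"
  then show "lsize (restr C h) A \<le> Linf h"
    using lsize_restr_mono[of "C \<inter> X" X A h] lsize_le_Linf[of A h]
    by (simp add: lsize_eq restr_restr Int_absorb2 Int_assoc[symmetric]
        Int_absorb2[of A X] inf_commute)
qed

lemma level_eq: "level h lam = Inf {m B | B. B \<subseteq> X \<and> Linf (restr (X - B) h) \<le> lam}"
  by (simp add: super_level_def)

lemma level_le: "B \<subseteq> X \<Longrightarrow> Linf (restr (X - B) h) \<le> lam \<Longrightarrow> level h lam \<le> m B"
  unfolding level_eq by (rule cInf_lower) (auto intro!: bdd_belowI[of _ 0] meas_nonneg)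

lemma level_geI:
  assumes "0 \<le> lam" "\<And>B. B \<subseteq> X \<Longrightarrow> Linf (restr (X - B) h) \<le> lam \<Longrightarrow> c \<le> m B"
  shows "c \<le> level h lam"
  unfolding level_eq
proof (rule cInf_greatest)
  have "Linf (restr (X - X) h) \<le> lam"
    using assms(1) by (simp add: restr_empty Linf_zero)
  then show "{m B | B. B \<subseteq> X \<and> Linf (restr (X - B) h) \<le> lam} \<noteq> {}"
    by blast
qed (use assms(2) in auto)

lemma level_nonneg: "0 \<le> lam \<Longrightarrow> 0 \<le> level h lam"
  by (rule level_geI) (auto intro: meas_nonneg)

lemma level_le_meas_X: "0 \<le> lam \<Longrightarrow> level h lam \<le> m X"
  by (rule level_le) (auto simp: restr_empty Linf_zero)

lemma level_eq_0: "Linf h \<le> lam \<Longrightarrow> level h lam = 0"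
  using level_le[of "{}" h lam] Linf_restr_le[of X h] level_nonneg[of lam h] Linf_nonneg[of h]
  by (simp add: meas_empty)

lemma level_antimono: "0 \<le> lam \<Longrightarrow> lam \<le> lam' \<Longrightarrow> level h lam' \<le> level h lam"
  by (rule level_geI) (auto intro: level_le)

lemma antitone_cutoff_level: "antitone_cutoff (level h)"
  unfolding antitone_cutoff_def using Linf_nonneg[of h]
  by (intro exI[of _ "m X"] exI[of _ "Linf h + 1"])
    (auto simp: level_nonneg level_le_meas_X level_antimono level_eq_0)

lemma level_restr_mono: "C \<subseteq> D \<Longrightarrow> 0 \<le> lam \<Longrightarrow> level (restr C h) lam \<le> level (restr D h) lam"
proof (rule level_geI)
  fix B assume "C \<subseteq> D" "B \<subseteq> X" "Linf (restr (X - B) (restr D h)) \<le> lam"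
  moreover have "Linf (restr (X - B) (restr C h)) \<le> Linf (restr (X - B) (restr D h))"
    unfolding restr_restr using \<open>C \<subseteq> D\<close> by (intro Linf_restr_mono) auto
  ultimately show "level (restr C h) lam \<le> m B"
    by (intro level_le) auto
qed

lemma layer_integrable_level: "0 < s \<Longrightarrow> layer_integrable s (level h)"
  by (intro layer_integrable_antitone_cutoff antitone_cutoff_level)

lemma layer_integral_level_nonneg: "0 < s \<Longrightarrow> 0 \<le> layer_integral s (level h)"
  by (intro layer_integral_nonneg level_nonneg) auto

lemma Lout_norm_eq: "Lout_norm X m t s S h = layer_integral s (level h) powr (1 / s)"
  by (simp add: Lout_norm_def layer_integral_def)

lemma Lout_norm_powr: "0 < s \<Longrightarrow> Lout_norm X m t s S h powr s = layer_integral s (level h)"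
  unfolding Lout_norm_eq powr_powr using layer_integral_level_nonneg[of s h] by simp

lemma layer_integral_level_restr_mono:
  "0 < s \<Longrightarrow> C \<subseteq> D \<Longrightarrow> layer_integral s (level (restr C h)) \<le> layer_integral s (level (restr D h))"
  by (intro layer_integral_mono layer_integrable_level level_restr_mono) auto

lemma caratheodory_finite: "caratheodory X m K \<A> \<Longrightarrow> finite \<A>"
  unfolding caratheodory_def using finite_X by (meson finite_Pow_iff finite_subset)

lemma level_caratheodory:
  assumes "caratheodory X m K \<A>" "0 < K" "0 \<le> lam"
  shows "(\<Sum>A\<in>\<A>. level (restr A h) lam) \<le> K * level h lam"
proof -
  have "(\<Sum>A\<in>\<A>. level (restr A h) lam) / K \<le> level h lam"
  proof (rule level_geI[OF assms(3)])
    fix B assume B: "B \<subseteq> X" "Linf (restr (X - B) h) \<le> lam"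
    have "level (restr A h) lam \<le> m (B \<inter> A)" for A
    proof (rule level_le)
      have "Linf (restr (X - B \<inter> A) (restr A h)) \<le> Linf (restr (X - B) h)"
        unfolding restr_restr by (intro Linf_restr_mono) auto
      then show "Linf (restr (X - B \<inter> A) (restr A h)) \<le> lam"
        using B by simp
    qed (use B in auto)
    then have "(\<Sum>A\<in>\<A>. level (restr A h) lam) \<le> (\<Sum>A\<in>\<A>. m (B \<inter> A))"
      by (rule sum_mono)
    also have "\<dots> \<le> K * m (B \<inter> \<Union>\<A>)"
      using assms(1) B unfolding caratheodory_def by auto
    also have "\<dots> \<le> K * m B"
      using B assms(2) by (intro mult_left_mono meas_mono) auto
    finally show "(\<Sum>A\<in>\<A>. level (restr A h) lam) / K \<le> m B"
      using assms(2) by (simp add: divide_le_eq mult.commute)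
  qed
  then show ?thesis
    using assms(2) by (simp add: divide_le_eq mult.commute)
qed

lemma layer_integral_level_caratheodory:
  assumes "caratheodory X m K \<A>" "0 < K" "0 < s"
  shows "(\<Sum>A\<in>\<A>. layer_integral s (level (restr A h))) \<le> K * layer_integral s (level h)"
proof -
  have fin: "finite \<A>"
    using assms(1) by (rule caratheodory_finite)
  have "(\<Sum>A\<in>\<A>. layer_integral s (level (restr A h)))
      = layer_integral s (\<lambda>x. \<Sum>A\<in>\<A>. level (restr A h) x)"
    using fin assms by (intro layer_integral_sum[symmetric] layer_integrable_level)
  also have "\<dots> \<le> layer_integral s (\<lambda>x. K * level h x)"
    using fin assms by (intro layer_integral_mono layer_integrable_sum layer_integrable_cmult
        layer_integrable_level level_caratheodory) auto
  also have "\<dots> = K * layer_integral s (level h)"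
    using assms by (intro layer_integral_cmult layer_integrable_level)
  finally show ?thesis .
qed

lemma S_restr_powr_le:
  assumes "Linf g \<le> b" "0 \<le> b" "A \<subseteq> X" "A' \<subseteq> A"
  shows "S (restr A' g) powr t \<le> b powr t * m A"
proof (cases "A = {}")
  case True
  then show ?thesis
    using assms(4) by (simp add: restr_empty S_zero meas_empty)
next
  case False
  have "S (restr A' g) powr t \<le> S (restr A g) powr t"
    using assms t_pos by (intro powr_mono2 S_restr_mono S_nonneg) auto
  also have "\<dots> \<le> b powr t * m A"
    using lsize_le_iff[OF assms(3) False assms(2), of g] lsize_le_Linf[OF assms(3) False, of g] assms(1)
    by linarith
  finally show ?thesis .
qed

lemma lsize_restr_superset: "A \<subseteq> Y \<Longrightarrow> lsize (restr Y h) A = lsize h A"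
  by (simp add: lsize_eq restr_restr Int_absorb2)

lemma lsize_restr_disjoint: "A \<inter> Y = {} \<Longrightarrow> lsize (restr Y h) A = 0"
  by (simp add: lsize_eq restr_restr restr_empty S_zero)

lemma lsize_restr_le_lsize_Int:
  assumes "A \<subseteq> X" "A \<inter> Y \<noteq> {}"
  shows "lsize (restr Y h) A \<le> lsize h (A \<inter> Y)"
proof -
  have "m A powr (- 1 / t) \<le> m (A \<inter> Y) powr (- 1 / t)"
    using assms t_pos by (intro powr_mono2' meas_pos meas_mono) auto
  then show ?thesis
    unfolding lsize_eq restr_restr Int_absorb by (intro mult_right_mono S_nonneg)
qed

end

section \<open>Quasi-additive sizes\<close>

locale quasi_additive_size = outer_size +
  fixes \<kappa> :: real
  assumes \<kappa>_pos: "0 < \<kappa>"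
    and S_quasi_additive: "\<And>h C D. C \<inter> D = {} \<Longrightarrow> C \<union> D \<subseteq> X \<Longrightarrow>
       S (restr (C \<union> D) h) powr t \<le> \<kappa> * (S (restr C h) powr t + S (restr D h) powr t)"
begin

definition quasi_scale :: real where
  "quasi_scale = (2 * \<kappa>) powr (1 / t)"

lemma quasi_scale_pos: "0 < quasi_scale"
  using \<kappa>_pos by (simp add: quasi_scale_def)

lemma quasi_scale_powr: "quasi_scale powr t = 2 * \<kappa>"
  using \<kappa>_pos t_pos by (simp add: quasi_scale_def powr_powr)

lemma Linf_Un_le:
  assumes "C \<inter> D = {}" "0 < lam"
    and B1: "B1 \<subseteq> X" "Linf (restr (X - B1) (restr C h)) \<le> lam / quasi_scale"
    and B2: "B2 \<subseteq> X" "Linf (restr (X - B2) (restr D h)) \<le> lam / quasi_scale"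
  shows "Linf (restr (X - (B1 \<union> B2)) (restr (C \<union> D) h)) \<le> lam"
proof (rule Linf_leI)
  fix A assume A: "A \<subseteq> X" "A \<noteq> {}"
  let ?A' = "A \<inter> (X - (B1 \<union> B2))" and ?b = "lam / quasi_scale"
  have restr_A: "restr A (restr (X - (B1 \<union> B2)) (restr (C \<union> D) h)) = restr (?A' \<inter> C \<union> ?A' \<inter> D) h"
    by (auto simp: restr_def fun_eq_iff)
  have restr_C: "restr (?A' \<inter> C) h = restr ?A' (restr (X - B1) (restr C h))"
    and restr_D: "restr (?A' \<inter> D) h = restr ?A' (restr (X - B2) (restr D h))"
    by (auto simp: restr_def fun_eq_iff)
  have "S (restr ?A' (restr (X - B1) (restr C h))) powr t \<le> ?b powr t * m A"
    and "S (restr ?A' (restr (X - B2) (restr D h))) powr t \<le> ?b powr t * m A"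
    using B1 B2 A assms(2) quasi_scale_pos by (intro S_restr_powr_le; auto)+
  then have bounds: "S (restr (?A' \<inter> C) h) powr t \<le> ?b powr t * m A"
      "S (restr (?A' \<inter> D) h) powr t \<le> ?b powr t * m A"
    unfolding restr_C restr_D .
  have "S (restr A (restr (X - (B1 \<union> B2)) (restr (C \<union> D) h))) powr t
      \<le> \<kappa> * (S (restr (?A' \<inter> C) h) powr t + S (restr (?A' \<inter> D) h) powr t)"
    unfolding restr_A using assms(1) A by (intro S_quasi_additive) auto
  also have "\<dots> \<le> \<kappa> * (?b powr t * m A + ?b powr t * m A)"
    using \<kappa>_pos bounds by (intro mult_left_mono add_mono) auto
  also have "\<dots> = lam powr t * m A"
    using assms(2) quasi_scale_pos \<kappa>_pos by (simp add: powr_divide quasi_scale_powr field_simps)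
  finally show "lsize (restr (X - (B1 \<union> B2)) (restr (C \<union> D) h)) A \<le> lam"
    using lsize_le_iff[OF A] assms(2) by simp
qed (use assms(2) in simp)

lemma level_quasi_additive:
  assumes "C \<inter> D = {}" "0 < lam"
  shows "level (restr (C \<union> D) h) lam
    \<le> level (restr C h) (lam / quasi_scale) + level (restr D h) (lam / quasi_scale)"
proof -
  have nonneg: "0 \<le> lam / quasi_scale"
    using assms(2) quasi_scale_pos by simp
  have "level (restr (C \<union> D) h) lam - level (restr C h) (lam / quasi_scale)
      \<le> level (restr D h) (lam / quasi_scale)"
  proof (rule level_geI[OF nonneg])
    fix B2 assume B2: "B2 \<subseteq> X" "Linf (restr (X - B2) (restr D h)) \<le> lam / quasi_scale"
    have "level (restr (C \<union> D) h) lam - m B2 \<le> level (restr C h) (lam / quasi_scale)"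
    proof (rule level_geI[OF nonneg])
      fix B1 assume B1: "B1 \<subseteq> X" "Linf (restr (X - B1) (restr C h)) \<le> lam / quasi_scale"
      have "level (restr (C \<union> D) h) lam \<le> m (B1 \<union> B2)"
        using B1 B2 by (intro level_le Linf_Un_le[OF assms]) auto
      also have "\<dots> \<le> m B1 + m B2"
        using B1 B2 by (intro meas_Un_le)
      finally show "level (restr (C \<union> D) h) lam - m B2 \<le> m B1"
        by simp
    qed
    then show "level (restr (C \<union> D) h) lam - level (restr C h) (lam / quasi_scale) \<le> m B2"
      by simp
  qed
  then show ?thesis
    by simp
qed

lemma layer_integral_level_quasi_additive:
  assumes "0 < s" "C \<inter> D = {}"
  shows "layer_integral s (level (restr (C \<union> D) h))
    \<le> quasi_scale powr s * (layer_integral s (level (restr C h)) + layer_integral s (level (restr D h)))"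
proof -
  let ?lC = "\<lambda>x. level (restr C h) (x / quasi_scale)"
  let ?lD = "\<lambda>x. level (restr D h) (x / quasi_scale)"
  have integrable: "layer_integrable s ?lC" "layer_integrable s ?lD"
    using assms(1) quasi_scale_pos
    by (auto intro: layer_integrable_antitone_cutoff antitone_cutoff_scale antitone_cutoff_level)
  have "layer_integral s (level (restr (C \<union> D) h)) \<le> layer_integral s (\<lambda>x. ?lC x + ?lD x)"
    using assms integrable
    by (intro layer_integral_mono layer_integrable_level layer_integrable_add level_quasi_additive)
  also have "\<dots> = layer_integral s ?lC + layer_integral s ?lD"
    using integrable by (rule layer_integral_add)
  also have "\<dots> = quasi_scale powr s * (layer_integral s (level (restr C h)) + layer_integral s (level (restr D h)))"
    using assms quasi_scale_pos by (simp add: layer_integral_scale distrib_left)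
  finally show ?thesis .
qed

end

text \<open>In the theorem \<open>c\<close>, \<open>C\<close> and \<open>C'\<close> are \<open>selection_const\<close>, \<open>sparsity_const\<close> and
  \<open>norm_equiv_const\<close>; \<open>quasi_const\<close> is the constant in the quasi-triangle inequality for the
  \<open>q\<close>-th power of the \<open>L\<^sup>q\<^sub>\<nu>(\<ell>\<^sup>r\<^sub>\<omega>)\<close> size.\<close>

definition quasi_const :: "real \<Rightarrow> real \<Rightarrow> real" where
  "quasi_const q r = 2 powr (q / r)"

definition selection_const :: "real \<Rightarrow> real \<Rightarrow> real \<Rightarrow> real" where
  "selection_const q r K = (2 * K * quasi_const q r) powr (- 1 / q)"

definition sparsity_const :: "real \<Rightarrow> real \<Rightarrow> real \<Rightarrow> real" where
  "sparsity_const q r K = 2 * K * quasi_const q r * 2 powr q"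

definition geometric_const :: "real \<Rightarrow> real" where
  "geometric_const p = 1 / (1 - 2 powr (- p))"

definition norm_equiv_const :: "real \<Rightarrow> real \<Rightarrow> real \<Rightarrow> real \<Rightarrow> real \<Rightarrow> real" where
  "norm_equiv_const p q r \<Phi> K =
     \<Phi> * 2 powr p + geometric_const p ^ 2 * sparsity_const q r K / selection_const q r K powr p"

lemma quasi_const_ge_1: "0 \<le> q \<Longrightarrow> 0 < r \<Longrightarrow> 1 \<le> quasi_const q r"
  unfolding quasi_const_def by (simp add: ge_one_powr_ge_zero)

lemma quasi_const_pos: "0 < quasi_const q r"
  by (simp add: quasi_const_def)

lemma selection_const_pos: "0 < K \<Longrightarrow> 0 < selection_const q r K"
  using quasi_const_pos[of q r] by (simp add: selection_const_def)

lemma selection_const_powr: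
  assumes "0 < q" "0 < K"
  shows "selection_const q r K powr q = 1 / (2 * K * quasi_const q r)"
proof -
  have "selection_const q r K powr q = (2 * K * quasi_const q r) powr (- 1)"
    using assms(1) by (simp add: selection_const_def powr_powr)
  then show ?thesis
    using assms(2) quasi_const_pos[of q r] by (simp add: powr_minus_divide)
qed

lemma sparsity_const_pos: "0 < K \<Longrightarrow> 0 < sparsity_const q r K"
  using quasi_const_pos[of q r] by (simp add: sparsity_const_def)

lemma geometric_const_ge_1: "0 < p \<Longrightarrow> 1 \<le> geometric_const p"
  using powr_less_one[of 2 "- p"] by (simp add: geometric_const_def field_simps)

lemma norm_equiv_const_pos: "0 < p \<Longrightarrow> 0 < \<Phi> \<Longrightarrow> 0 < K \<Longrightarrow> 0 < norm_equiv_const p q r \<Phi> K"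
  unfolding norm_equiv_const_def
  using geometric_const_ge_1[of p] sparsity_const_pos[of K q r] selection_const_pos[of K q r]
  by (intro add_pos_nonneg) auto

lemma Lr_norm_powr:
  "(\<forall>x\<in>X. 0 < w x) \<Longrightarrow> 0 < r \<Longrightarrow> Lr_norm X w r h powr r = (\<Sum>x\<in>X. w x * cmod (h x) powr r)"
  unfolding Lr_norm_def powr_powr by (simp add: sum_nonneg less_imp_le)

locale canopy_setting =
  fixes X :: "'a set" and \<mu> \<nu> :: "'a set \<Rightarrow> real" and w :: "'a \<Rightarrow> real"
    and \<E> :: "'a set set" and \<C> :: "'a set \<Rightarrow> 'a set set" and f :: "'a \<Rightarrow> complex"
    and p q r \<Phi> K :: real
  assumes finite_X: "finite X" and outer_\<mu>: "outer_measure X \<mu>" and outer_\<nu>: "outer_measure X \<nu>"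
    and w_pos: "\<forall>x\<in>X. 0 < w x" and canopy: "canopy X \<mu> \<nu> \<Phi> K \<E> \<C>"
    and p_pos: "0 < p" and q_pos: "0 < q" and r_pos: "0 < r"
    and \<Phi>_ge_1: "1 \<le> \<Phi>" and K_ge_1: "1 \<le> K"
begin

sublocale nu: quasi_additive_size X \<nu> r "Lr_norm X w r" 1
proof
  show "finite X" "outer_measure X \<nu>" "0 < r" "(0::real) < 1"
    by (auto simp: finite_X outer_\<nu> r_pos)
  show "0 \<le> Lr_norm X w r h" for h
    by (simp add: Lr_norm_def)
  show "Lr_norm X w r (\<lambda>_. 0) = 0"
    by (simp add: Lr_norm_def)
  show "Lr_norm X w r (restr C h) \<le> Lr_norm X w r (restr D h)" if "C \<subseteq> D" "D \<subseteq> X" for h C D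
    unfolding Lr_norm_def using that w_pos r_pos
    by (intro powr_mono2 sum_mono mult_left_mono sum_nonneg) (auto simp: restr_def less_imp_le)
  show "Lr_norm X w r (restr (C \<union> D) h) powr r
      \<le> 1 * (Lr_norm X w r (restr C h) powr r + Lr_norm X w r (restr D h) powr r)"
    if "C \<inter> D = {}" "C \<union> D \<subseteq> X" for h C D
    unfolding Lr_norm_powr[OF w_pos r_pos] using that r_pos
    by (auto simp: sum.distrib[symmetric] restr_def distrib_left intro!: sum_mono)
qed

abbreviation "N \<equiv> Lout_norm X \<nu> r q (Lr_norm X w r)"

lemma N_powr: "N h powr q = layer_integral q (nu.level h)"
  using nu.Lout_norm_powr[OF q_pos] .

lemma N_zero: "N (\<lambda>_. 0) = 0"
proof -
  have "layer_integral q (nu.level (\<lambda>_. 0)) = layer_integral q (\<lambda>_. 0)"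
    by (intro layer_integral_cong nu.level_eq_0) (simp add: nu.Linf_zero)
  then show ?thesis
    by (simp add: nu.Lout_norm_eq layer_integral_def)
qed

sublocale mu: outer_size X \<mu> q N
proof
  show "finite X" "outer_measure X \<mu>" "0 < q"
    by (auto simp: finite_X outer_\<mu> q_pos)
  show "0 \<le> N h" for h
    by (simp add: Lout_norm_def)
  show "N (\<lambda>_. 0) = 0"
    by (rule N_zero)
  show "N (restr C h) \<le> N (restr D h)" if "C \<subseteq> D" "D \<subseteq> X" for h C D
    unfolding nu.Lout_norm_eq using that q_pos
    by (intro powr_mono2 nu.layer_integral_level_restr_mono nu.layer_integral_level_nonneg) auto
qed

lemma N_quasi_additive:
  assumes "C \<inter> D = {}"
  shows "N (restr (C \<union> D) h) powr q \<le> quasi_const q r * (N (restr C h) powr q + N (restr D h) powr q)"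
proof -
  have "nu.quasi_scale powr q = quasi_const q r"
    by (simp add: nu.quasi_scale_def quasi_const_def powr_powr)
  then show ?thesis
    unfolding N_powr using nu.layer_integral_level_quasi_additive[OF q_pos assms, of h] by simp
qed

lemma N_caratheodory: "caratheodory X \<nu> K \<A> \<Longrightarrow> (\<Sum>A\<in>\<A>. N (restr A h) powr q) \<le> K * N h powr q"
  unfolding N_powr using nu.layer_integral_level_caratheodory[OF _ _ q_pos] K_ge_1 by auto

abbreviation "BC \<equiv> cover_union \<C>"

lemma covering_function: "covering_function X \<mu> \<Phi> \<E> \<C>"
  using canopy unfolding canopy_def by simp

lemma cover_union_subset:
  assumes "A \<subseteq> X"
  shows "BC A \<subseteq> X"
proof -
  have "\<E> \<subseteq> Pow X" "\<C> A \<subseteq> \<E>"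
    using covering_function assms unfolding covering_function_def by simp_all
  then show ?thesis
    unfolding cover_union_def by blast
qed

lemma subset_cover_union: "A \<subseteq> X \<Longrightarrow> A \<subseteq> BC A"
  using covering_function unfolding covering_function_def by (simp (no_asm_simp))

lemma cover_union_meas_le: "A \<subseteq> X \<Longrightarrow> \<mu> (BC A) \<le> \<Phi> * \<mu> A"
  using covering_function unfolding covering_function_def by (simp (no_asm_simp))

lemma cover_union_mono: "A \<subseteq> A' \<Longrightarrow> A' \<subseteq> X \<Longrightarrow> BC A \<subseteq> BC A'"
  using covering_function unfolding covering_function_def by (simp (no_asm_simp))

lemma cover_union_empty: "BC {} = {}"
proof -
  have "\<mu> (BC {}) \<le> 0"
    using cover_union_meas_le[of "{}"] mu.meas_empty by simp
  moreover have "BC {} \<subseteq> X"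
    by (rule cover_union_subset) simp
  ultimately show ?thesis
    using mu.meas_pos[of "BC {}"] by linarith
qed

lemma caratheodory_insert:
  "caratheodory X \<nu> K \<A> \<Longrightarrow> D \<subseteq> X \<Longrightarrow> D \<inter> BC (\<Union>\<A>) = {} \<Longrightarrow> caratheodory X \<nu> K (insert D \<A>)"
  using canopy unfolding canopy_def by (simp (no_asm_simp))

end

section \<open>One greedy step\<close>

context canopy_setting
begin

abbreviation "sel \<equiv> selection_const q r K"
abbreviation "spars \<equiv> sparsity_const q r K"

definition admissible :: "real \<Rightarrow> 'a set \<Rightarrow> 'a set set \<Rightarrow> bool" where
  "admissible a U \<A> \<longleftrightarrow> caratheodory X \<nu> K \<A> \<and>
     (\<forall>A\<in>\<A>. A \<noteq> {} \<and> A \<subseteq> X - BC U \<and> a < mu.lsize (restr (X - BC U) f) A)"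

lemma admissible_Union_subset: "admissible a U \<A> \<Longrightarrow> \<Union>\<A> \<subseteq> X - BC U"
  unfolding admissible_def by blast

lemma maximal_admissible_exists:
  obtains \<A> where "admissible a U \<A>" "\<And>\<A>'. admissible a U \<A>' \<Longrightarrow> card (\<Union>\<A>') \<le> card (\<Union>\<A>)"
proof -
  have empty: "admissible a U {}"
    unfolding admissible_def caratheodory_def using nu.meas_empty by simp
  have bound: "card (\<Union>\<A>) < card X + 1" if "admissible a U \<A>" for \<A>
  proof -
    have "\<Union>\<A> \<subseteq> X"
      using admissible_Union_subset[OF that] by blast
    then show ?thesis
      using card_mono[OF finite_X] by (simp add: less_Suc_eq_le)
  qed
  show ?thesis
    using ex_has_greatest_nat[of "admissible a U" "{}" "\<lambda>\<A>. card (\<Union>\<A>)" "card X + 1"] empty bound that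
    by blast
qed

text \<open>A set of large local size left outside the new canopy could be added to a maximal
  admissible family, by the canopy condition.\<close>

lemma maximal_admissible_Linf_le:
  assumes U: "U \<subseteq> X" and a: "0 < a" and adm: "admissible a U \<A>"
    and max: "\<And>\<A>'. admissible a U \<A>' \<Longrightarrow> card (\<Union>\<A>') \<le> card (\<Union>\<A>)"
  shows "mu.Linf (restr (X - BC (U \<union> \<Union>\<A>)) f) \<le> a"
proof (rule mu.Linf_leI)
  fix A assume A: "A \<subseteq> X" "A \<noteq> {}"
  let ?E = "\<Union>\<A>" and ?Y = "X - BC (U \<union> \<Union>\<A>)"
  have E: "?E \<subseteq> X - BC U"
    using adm by (rule admissible_Union_subset)
  then have UE: "U \<union> ?E \<subseteq> X"
    using U by blast
  have BC_U: "BC U \<subseteq> BC (U \<union> ?E)"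
    using cover_union_mono[OF _ UE] by blast
  have BC_E: "?E \<subseteq> BC ?E" "BC ?E \<subseteq> BC (U \<union> ?E)"
    using subset_cover_union[of ?E] cover_union_mono[OF _ UE] E by blast+
  show "mu.lsize (restr ?Y f) A \<le> a"
  proof (rule ccontr)
    assume "\<not> ?thesis"
    then have gt: "a < mu.lsize (restr ?Y f) A"
      by simp
    then have ne: "A \<inter> ?Y \<noteq> {}"
      using a mu.lsize_restr_disjoint by fastforce
    have sub: "A \<inter> ?Y \<subseteq> X - BC U"
      using BC_U by blast
    then have "mu.lsize (restr ?Y f) A \<le> mu.lsize (restr (X - BC U) f) (A \<inter> ?Y)"
      using mu.lsize_restr_le_lsize_Int[OF A(1) ne] mu.lsize_restr_superset by simp
    moreover have "caratheodory X \<nu> K (insert (A \<inter> ?Y) \<A>)"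
      using adm BC_E A(1) unfolding admissible_def by (intro caratheodory_insert) auto
    ultimately have "admissible a U (insert (A \<inter> ?Y) \<A>)"
      using adm gt ne sub unfolding admissible_def by auto
    then have "card (A \<inter> ?Y \<union> ?E) \<le> card ?E"
      using max[of "insert (A \<inter> ?Y) \<A>"] by simp
    moreover have "A \<inter> ?Y \<inter> ?E = {}"
      using BC_E by blast
    moreover have "finite (A \<inter> ?Y)" "finite ?E"
      using A(1) E by (auto intro: finite_subset[OF _ finite_X])
    ultimately show False
      using ne by (simp add: card_Un_disjoint)
  qed
qed (use a in simp)

lemma admissible_N_powr_gt:
  assumes adm: "admissible a U \<A>" and a: "0 < a" and ne: "\<Union>\<A> \<noteq> {}"
  shows "a powr q * \<mu> (\<Union>\<A>) < K * N (restr (\<Union>\<A>) (restr (X - BC U) f)) powr q"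
proof -
  let ?g = "restr (X - BC U) f"
  have car: "caratheodory X \<nu> K \<A>"
    and members: "\<And>A. A \<in> \<A> \<Longrightarrow> A \<noteq> {} \<and> A \<subseteq> X - BC U \<and> a < mu.lsize ?g A"
    using adm unfolding admissible_def by auto
  have large: "a powr q * \<mu> A < N (restr A ?g) powr q" if "A \<in> \<A>" for A
    using members[OF that] mu.lsize_gt_iff[of A a ?g] a by auto
  have fin: "finite \<A>"
    using car by (rule nu.caratheodory_finite)
  have "a powr q * \<mu> (\<Union>\<A>) \<le> a powr q * (\<Sum>A\<in>\<A>. \<mu> A)"
    using fin members by (intro mult_left_mono mu.meas_Union_le) auto
  also have "\<dots> = (\<Sum>A\<in>\<A>. a powr q * \<mu> A)"
    by (simp add: sum_distrib_left)
  also have "\<dots> < (\<Sum>A\<in>\<A>. N (restr A ?g) powr q)"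
    using fin ne large by (intro sum_strict_mono) auto
  also have "\<dots> = (\<Sum>A\<in>\<A>. N (restr A (restr (\<Union>\<A>) ?g)) powr q)"
  proof (intro sum.cong refl)
    fix A assume "A \<in> \<A>"
    then have "restr A (restr (\<Union>\<A>) ?g) = restr A ?g"
      by (auto simp: restr_def fun_eq_iff)
    then show "N (restr A ?g) powr q = N (restr A (restr (\<Union>\<A>) ?g)) powr q"
      by simp
  qed
  also have "\<dots> \<le> K * N (restr (\<Union>\<A>) ?g) powr q"
    using car by (rule N_caratheodory)
  finally show ?thesis .
qed

lemma admissible_lsize_gt:
  assumes adm: "admissible a U \<A>" and a: "0 < a" and ne: "\<Union>\<A> \<noteq> {}"
  shows "sel * a < mu.lsize (restr (X - BC U) f) (\<Union>\<A>)"
proof -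
  have E: "\<Union>\<A> \<subseteq> X"
    using admissible_Union_subset[OF adm] by blast
  have "(sel * a) powr q * \<mu> (\<Union>\<A>) = a powr q * \<mu> (\<Union>\<A>) / (2 * K * quasi_const q r)"
    using a K_ge_1 q_pos selection_const_pos[of K q r] by (simp add: powr_mult selection_const_powr)
  also have "\<dots> \<le> a powr q * \<mu> (\<Union>\<A>) / K"
    using K_ge_1 quasi_const_ge_1[of q r] q_pos r_pos mu.meas_nonneg[OF E]
    by (intro divide_left_mono) (auto intro!: mult_nonneg_nonneg)
  also have "\<dots> < N (restr (\<Union>\<A>) (restr (X - BC U) f)) powr q"
    using admissible_N_powr_gt[OF assms] K_ge_1 by (simp add: divide_less_eq mult.commute)
  finally show ?thesis
    using mu.lsize_gt_iff[OF E ne] selection_const_pos[of K q r] a K_ge_1 by simp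
qed

text \<open>Splitting \<open>\<Union>\<A>\<close> along \<open>B\<close>: inside \<open>B\<close> the size is at most \<open>2a\<close>, outside at most \<open>c a\<close>,
  and \<open>c\<close> is chosen so small that the second part cannot account for the superadditive bound.\<close>

lemma admissible_meas_le_meas:
  assumes adm: "admissible a U \<A>" and a: "0 < a"
    and hyp: "mu.Linf (restr (X - BC U) f) \<le> 2 * a"
    and B: "B \<subseteq> X" "mu.Linf (restr (X - B) f) \<le> sel * a"
  shows "\<mu> (\<Union>\<A>) \<le> spars * \<mu> B"
proof (cases "\<Union>\<A> = {}")
  case True
  then show ?thesis
    unfolding True using mu.meas_empty mu.meas_nonneg[OF B(1)] sparsity_const_pos[of K q r] K_ge_1
    by simp
next
  case ne: False
  let ?E = "\<Union>\<A>" and ?g = "restr (X - BC U) f" and ?\<rho> = "quasi_const q r"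
  have E: "?E \<subseteq> X - BC U"
    using adm by (rule admissible_Union_subset)
  have sel: "0 < sel"
    using selection_const_pos K_ge_1 by simp
  have "N (restr (?E \<inter> B) ?g) powr q \<le> (2 * a) powr q * \<mu> (?E \<inter> B)"
    using E a hyp by (intro mu.S_restr_powr_le) auto
  also have "\<dots> \<le> (2 * a) powr q * \<mu> B"
    using B by (intro mult_left_mono mu.meas_mono) auto
  finally have inside: "N (restr (?E \<inter> B) ?g) powr q \<le> (2 * a) powr q * \<mu> B" .
  have "restr (?E - B) ?g = restr (?E - B) (restr (X - B) f)"
    using E by (auto simp: restr_def fun_eq_iff)
  then have outside: "N (restr (?E - B) ?g) powr q \<le> (sel * a) powr q * \<mu> ?E"
    using E ne B(2) sel a by (auto intro!: mu.S_restr_powr_le)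
  have "a powr q * \<mu> ?E < K * N (restr ?E ?g) powr q"
    using admissible_N_powr_gt[OF adm a ne] .
  also have "\<dots> \<le> K * (?\<rho> * (N (restr (?E \<inter> B) ?g) powr q + N (restr (?E - B) ?g) powr q))"
  proof -
    have "?E \<inter> B \<union> (?E - B) = ?E" "?E \<inter> B \<inter> (?E - B) = {}"
      by blast+
    then show ?thesis
      using N_quasi_additive[of "?E \<inter> B" "?E - B" ?g] K_ge_1 by (intro mult_left_mono) auto
  qed
  also have "\<dots> \<le> K * (?\<rho> * ((2 * a) powr q * \<mu> B + (sel * a) powr q * \<mu> ?E))"
    using K_ge_1 quasi_const_pos[of q r] inside outside
    by (intro mult_left_mono add_mono) auto
  also have "\<dots> = K * ?\<rho> * 2 powr q * a powr q * \<mu> B + a powr q * \<mu> ?E / 2"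
  proof -
    have "(2 * a) powr q = 2 powr q * a powr q" "(sel * a) powr q = a powr q / (2 * K * ?\<rho>)"
      using a sel q_pos K_ge_1 by (simp_all add: powr_mult selection_const_powr)
    then show ?thesis
      using K_ge_1 quasi_const_pos[of q r] by (simp add: field_simps)
  qed
  finally have "a powr q * \<mu> ?E < 2 * (K * ?\<rho> * 2 powr q * a powr q * \<mu> B)"
    by linarith
  also have "\<dots> = a powr q * (spars * \<mu> B)"
    by (simp add: sparsity_const_def)
  finally show ?thesis
    using a by simp
qed

lemma admissible_meas_le_level:
  assumes "admissible a U \<A>" "0 < a" "mu.Linf (restr (X - BC U) f) \<le> 2 * a"
  shows "\<mu> (\<Union>\<A>) \<le> spars * mu.level f (sel * a)"
proof -
  have pos: "0 < spars" "0 < sel"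
    using sparsity_const_pos selection_const_pos K_ge_1 by auto
  have "\<mu> (\<Union>\<A>) / spars \<le> mu.level f (sel * a)"
  proof (rule mu.level_geI)
    fix B assume "B \<subseteq> X" "mu.Linf (restr (X - B) f) \<le> sel * a"
    then have "\<mu> (\<Union>\<A>) \<le> spars * \<mu> B"
      by (rule admissible_meas_le_meas[OF assms])
    then show "\<mu> (\<Union>\<A>) / spars \<le> \<mu> B"
      using pos by (simp add: divide_le_eq mult.commute)
  qed (use pos assms(2) in simp)
  then show ?thesis
    using pos by (simp add: divide_le_eq mult.commute)
qed

lemma greedy_step_exists:
  assumes "U \<subseteq> X" "0 < a" "mu.Linf (restr (X - BC U) f) \<le> 2 * a"
  shows "\<exists>E. E \<subseteq> X \<and> E \<inter> BC U = {}
    \<and> (E \<noteq> {} \<longrightarrow> sel * a < mu.lsize (restr (X - BC U) f) E)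
    \<and> mu.Linf (restr (X - BC (U \<union> E)) f) \<le> a \<and> \<mu> E \<le> spars * mu.level f (sel * a)"
proof -
  obtain \<A> where adm: "admissible a U \<A>"
    and max: "\<And>\<A>'. admissible a U \<A>' \<Longrightarrow> card (\<Union>\<A>') \<le> card (\<Union>\<A>)"
    using maximal_admissible_exists[of a U] by blast
  have "\<Union>\<A> \<subseteq> X - BC U"
    using adm by (rule admissible_Union_subset)
  then show ?thesis
    using admissible_lsize_gt[OF adm assms(2)] maximal_admissible_Linf_le[OF assms(1,2) adm max]
      admissible_meas_le_level[OF adm assms(2,3)]
    by (intro exI[of _ "\<Union>\<A>"]) auto
qed

end

section \<open>The greedy decomposition\<close>

context canopy_setting
begin

definition greedy_step :: "int \<Rightarrow> 'a set \<Rightarrow> 'a set \<Rightarrow> bool" where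
  "greedy_step k U E \<longleftrightarrow> E \<subseteq> X \<and> E \<inter> BC U = {}
     \<and> (E \<noteq> {} \<longrightarrow> sel * 2 powr real_of_int k < mu.lsize (restr (X - BC U) f) E)
     \<and> mu.Linf (restr (X - BC (U \<union> E)) f) \<le> 2 powr real_of_int k
     \<and> \<mu> E \<le> spars * mu.level f (sel * 2 powr real_of_int k)"

definition next_layer :: "int \<Rightarrow> 'a set \<Rightarrow> 'a set" where
  "next_layer k U = (SOME E. greedy_step k U E)"

lemma greedy_step_next_layer:
  assumes "U \<subseteq> X" "mu.Linf (restr (X - BC U) f) \<le> 2 powr (real_of_int k + 1)"
  shows "greedy_step k U (next_layer k U)"
proof -
  have "2 powr (real_of_int k + 1) = 2 * 2 powr real_of_int k"
    by (simp add: powr_add)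
  then have "\<exists>E. greedy_step k U E"
    unfolding greedy_step_def using greedy_step_exists[OF assms(1), of "2 powr real_of_int k"] assms(2)
    by auto
  then show ?thesis
    unfolding next_layer_def by (rule someI_ex)
qed

definition top_scale :: int where
  "top_scale = \<lceil>log 2 (mu.Linf f + 1)\<rceil>"

lemma Linf_le_top_scale: "mu.Linf f \<le> 2 powr real_of_int top_scale"
proof -
  have "mu.Linf f + 1 = 2 powr (log 2 (mu.Linf f + 1))"
    using mu.Linf_nonneg[of f] by simp
  also have "\<dots> \<le> 2 powr real_of_int top_scale"
    unfolding top_scale_def by (intro powr_mono) auto
  finally show ?thesis
    by simp
qed

primrec upper_layers :: "nat \<Rightarrow> 'a set" where
  "upper_layers 0 = {}"
| "upper_layers (Suc n) = upper_layers n \<union> next_layer (top_scale - 1 - int n) (upper_layers n)"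

definition layer :: "int \<Rightarrow> 'a set" where
  "layer k = (if top_scale \<le> k then {} else next_layer k (upper_layers (nat (top_scale - 1 - k))))"

abbreviation canopy_at :: "int \<Rightarrow> 'a set" where
  "canopy_at k \<equiv> BC (\<Union>l\<in>{k..}. layer l)"

lemma upper_layers_invariant:
  "upper_layers n \<subseteq> X \<and> mu.Linf (restr (X - BC (upper_layers n)) f) \<le> 2 powr real_of_int (top_scale - int n)"
proof (induction n)
  case 0
  then show ?case
    using mu.Linf_restr_le[of "X - {}" f] Linf_le_top_scale by (simp add: cover_union_empty)
next
  case (Suc n)
  then have "greedy_step (top_scale - 1 - int n) (upper_layers n) (next_layer (top_scale - 1 - int n) (upper_layers n))"
    by (intro greedy_step_next_layer) auto
  then show ?case
    using Suc unfolding greedy_step_def by (simp add: algebra_simps)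
qed

lemma greedy_step_upper_layers:
  "greedy_step (top_scale - 1 - int n) (upper_layers n) (next_layer (top_scale - 1 - int n) (upper_layers n))"
  using upper_layers_invariant[of n] by (intro greedy_step_next_layer) auto

lemma upper_layers_eq: "upper_layers n = (\<Union>l\<in>{top_scale - int n..}. layer l)"
proof (induction n)
  case 0
  then show ?case by (auto simp: layer_def)
next
  case (Suc n)
  have "{top_scale - int (Suc n)..} = insert (top_scale - 1 - int n) {top_scale - int n..}"
    by auto
  moreover have "layer (top_scale - 1 - int n) = next_layer (top_scale - 1 - int n) (upper_layers n)"
    by (simp add: layer_def)
  ultimately show ?case
    using Suc by auto
qed

lemma layers_from_subset: "(\<Union>l\<in>{k..}. layer l) \<subseteq> X"
proof (cases "k < top_scale")
  case True
  then show ?thesis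
    using upper_layers_eq[of "nat (top_scale - k)"] upper_layers_invariant[of "nat (top_scale - k)"]
    by simp
qed (auto simp: layer_def)

lemma greedy_step_layer:
  assumes "k < top_scale"
  shows "greedy_step k (\<Union>l\<in>{k+1..}. layer l) (layer k)"
proof -
  define n where "n = nat (top_scale - 1 - k)"
  have k: "k = top_scale - 1 - int n"
    using assms by (simp add: n_def)
  have "layer k = next_layer k (upper_layers n)"
    using assms by (simp add: layer_def n_def)
  moreover have "upper_layers n = (\<Union>l\<in>{k+1..}. layer l)"
    using upper_layers_eq[of n] k by simp
  ultimately show ?thesis
    using greedy_step_upper_layers[of n] k by simp
qed

lemma layer_subset: "layer k \<subseteq> X"
  using greedy_step_layer[of k] by (cases "k < top_scale") (auto simp: greedy_step_def layer_def)

lemma layer_disjoint_canopy: "layer k \<inter> canopy_at (k + 1) = {}"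
  using greedy_step_layer[of k] by (cases "k < top_scale") (auto simp: greedy_step_def layer_def)

lemma layer_disjoint:
  assumes "k \<noteq> l"
  shows "layer k \<inter> layer l = {}"
proof -
  have "layer k \<inter> layer l = {}" if "l < k" for k l
  proof -
    have "layer k \<subseteq> (\<Union>j\<in>{l+1..}. layer j)"
      using that by (intro UN_upper) auto
    also have "\<dots> \<subseteq> canopy_at (l + 1)"
      using layers_from_subset by (rule subset_cover_union)
    finally show ?thesis
      using layer_disjoint_canopy[of l] by blast
  qed
  then show ?thesis
    using assms by (metis Int_commute linorder_neqE)
qed

lemma layer_lsize_gt:
  "layer k \<noteq> {} \<Longrightarrow> sel * 2 powr real_of_int k < mu.lsize (restr (X - canopy_at (k + 1)) f) (layer k)"
  using greedy_step_layer[of k] by (cases "k < top_scale") (auto simp: greedy_step_def layer_def)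

lemma Linf_outside_canopy_le: "mu.Linf (restr (X - canopy_at k) f) \<le> 2 powr real_of_int k"
proof (cases "k < top_scale")
  case True
  have "{k..} = insert k {k+1..}"
    by auto
  then have "(\<Union>l\<in>{k..}. layer l) = (\<Union>l\<in>{k+1..}. layer l) \<union> layer k"
    by auto
  then show ?thesis
    using greedy_step_layer[OF True] by (simp add: greedy_step_def)
next
  case False
  then have "(\<Union>l\<in>{k..}. layer l) = {}"
    by (auto simp: layer_def)
  then have "mu.Linf (restr (X - canopy_at k) f) \<le> mu.Linf f"
    using mu.Linf_restr_le by (simp add: cover_union_empty)
  also have "\<dots> \<le> 2 powr real_of_int top_scale"
    by (rule Linf_le_top_scale)
  also have "\<dots> \<le> 2 powr real_of_int k"
    using False by (intro powr_mono) auto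
  finally show ?thesis .
qed

lemma level_le_meas_canopy: "mu.level f (2 powr real_of_int k) \<le> \<mu> (canopy_at k)"
  using Linf_outside_canopy_le[of k] layers_from_subset[of k]
  by (intro mu.level_le cover_union_subset)

lemma layer_meas_le_level: "\<mu> (layer k) \<le> spars * mu.level f (sel * 2 powr real_of_int k)"
proof (cases "k < top_scale")
  case True
  then show ?thesis
    using greedy_step_layer[of k] by (simp add: greedy_step_def)
next
  case False
  then show ?thesis
    using mu.level_nonneg[of "sel * 2 powr real_of_int k" f] selection_const_pos[of K q r]
      sparsity_const_pos[of K q r] K_ge_1
    by (simp add: layer_def mu.meas_empty)
qed

end

section \<open>Dyadic sums and the outer norm\<close>

lemma has_sum_sum_finite:
  fixes f :: "'i \<Rightarrow> 'b \<Rightarrow> 'c::topological_comm_monoid_add"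
  shows "finite I \<Longrightarrow> (\<And>i. i \<in> I \<Longrightarrow> (f i has_sum S i) A) \<Longrightarrow>
    ((\<lambda>x. \<Sum>i\<in>I. f i x) has_sum (\<Sum>i\<in>I. S i)) A"
proof (induction I rule: finite_induct)
  case empty
  then show ?case by simp
next
  case (insert i I)
  then show ?case
    using has_sum_add[of "f i" A "S i" "\<lambda>x. \<Sum>i\<in>I. f i x" "\<Sum>i\<in>I. S i"] by simp
qed

lemma has_sum_dyadic_geometric:
  fixes l :: int and p :: real
  assumes p: "0 < p"
  shows "((\<lambda>k::int. if k \<le> l then 2 powr (real_of_int k * p) else 0) has_sum
           (2 powr (real_of_int l * p) * geometric_const p)) UNIV"
proof -
  define z where "z = 2 powr (- p)"
  have z: "0 < z" "z < 1"
    using p by (auto simp: z_def powr_less_one)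
  have "(\<lambda>n. 2 powr (real_of_int l * p) * z ^ n) sums (2 powr (real_of_int l * p) * (1 / (1 - z)))"
    using z by (intro sums_mult geometric_sums) auto
  then have geometric: "((\<lambda>n. 2 powr (real_of_int l * p) * z ^ n) has_sum
      (2 powr (real_of_int l * p) * geometric_const p)) UNIV"
    using z by (intro sums_nonneg_imp_has_sum) (auto simp: geometric_const_def z_def)
  have bij: "bij_betw (\<lambda>n. l - int n) UNIV {..l}"
  proof (rule bij_betwI')
    show "\<exists>n\<in>UNIV. k = l - int n" if "k \<in> {..l}" for k
      using that by (intro bexI[of _ "nat (l - k)"]) auto
  qed auto
  have "2 powr (real_of_int (l - int n) * p) = 2 powr (real_of_int l * p) * z ^ n" for n
  proof -
    have "z ^ n = 2 powr (real n * (- p))"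
      unfolding z_def by (rule powr_power) simp
    then show ?thesis
      by (simp add: powr_add[symmetric] algebra_simps)
  qed
  then have "((\<lambda>k::int. 2 powr (real_of_int k * p)) has_sum
      (2 powr (real_of_int l * p) * geometric_const p)) {..l}"
    using geometric has_sum_reindex_bij_betw[OF bij, of "\<lambda>k. 2 powr (real_of_int k * p)"] by simp
  then show ?thesis
    by (subst has_sum_cong_neutral[where T = "{..l}" and g = "\<lambda>k. 2 powr (real_of_int k * p)"]) auto
qed

lemma dyadic_interval:
  assumes "0 < x"
  obtains k :: int where "2 powr real_of_int k \<le> x" "x < 2 powr (real_of_int k + 1)"
proof
  show "2 powr real_of_int \<lfloor>log 2 x\<rfloor> \<le> x"
    using assms powr_mono[of "real_of_int \<lfloor>log 2 x\<rfloor>" "log 2 x" 2] by simp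
  have "log 2 x < real_of_int \<lfloor>log 2 x\<rfloor> + 1"
    by linarith
  then show "x < 2 powr (real_of_int \<lfloor>log 2 x\<rfloor> + 1)"
    using assms powr_less_mono[of "log 2 x" _ 2] by fastforce
qed

lemma layer_integral_step_function:
  assumes "finite I" "0 < s" "\<And>i. i \<in> I \<Longrightarrow> 0 \<le> a i \<and> a i < b i"
  shows "layer_integrable s (\<lambda>x. \<Sum>i\<in>I. c i * indicator {a i<..<b i} x)"
    and "layer_integral s (\<lambda>x. \<Sum>i\<in>I. c i * indicator {a i<..<b i} x)
      = (\<Sum>i\<in>I. c i * (b i powr s - a i powr s))"
proof -
  have summands: "layer_integrable s (\<lambda>x. c i * indicator {a i<..<b i} x)"
    "layer_integral s (\<lambda>x. c i * indicator {a i<..<b i} x) = c i * (b i powr s - a i powr s)"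
    if "i \<in> I" for i
    using assms(2) assms(3)[OF that] layer_integral_indicator[of "a i" "b i" s "c i"] by auto
  show "layer_integrable s (\<lambda>x. \<Sum>i\<in>I. c i * indicator {a i<..<b i} x)"
    using assms(1) summands(1) by (rule layer_integrable_sum)
  have "layer_integral s (\<lambda>x. \<Sum>i\<in>I. c i * indicator {a i<..<b i} x)
      = (\<Sum>i\<in>I. layer_integral s (\<lambda>x. c i * indicator {a i<..<b i} x))"
    using assms(1) summands(1) by (rule layer_integral_sum)
  also have "\<dots> = (\<Sum>i\<in>I. c i * (b i powr s - a i powr s))"
    using summands(2) by (rule sum.cong[OF refl])
  finally show "layer_integral s (\<lambda>x. \<Sum>i\<in>I. c i * indicator {a i<..<b i} x)
      = (\<Sum>i\<in>I. c i * (b i powr s - a i powr s))" .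
qed

context canopy_setting
begin

definition layer_support :: "int set" where
  "layer_support = {k. layer k \<noteq> {}}"

lemma finite_layer_support: "finite layer_support"
proof -
  have "inj_on layer layer_support"
  proof (rule inj_onI)
    fix k l assume "k \<in> layer_support" "l \<in> layer_support" "layer k = layer l"
    then show "k = l"
      using layer_disjoint[of k l] unfolding layer_support_def by (metis Int_absorb mem_Collect_eq)
  qed
  moreover have "layer ` layer_support \<subseteq> Pow X"
    using layer_subset by auto
  then have "finite (layer ` layer_support)"
    using finite_X by (simp add: finite_subset)
  ultimately show ?thesis
    using finite_imageD by blast
qed

definition dyadic_sum :: real where
  "dyadic_sum = (\<Sum>k\<in>layer_support. 2 powr (real_of_int k * p) * \<mu> (layer k))"

lemma dyadic_sum_nonneg: "0 \<le> dyadic_sum"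
  unfolding dyadic_sum_def using layer_subset
  by (intro sum_nonneg mult_nonneg_nonneg mu.meas_nonneg) auto

lemma has_sum_dyadic_sum: "((\<lambda>k. 2 powr (real_of_int k * p) * \<mu> (layer k)) has_sum dyadic_sum) UNIV"
  unfolding dyadic_sum_def using finite_layer_support
  by (intro has_sum_finite_neutralI) (auto simp: layer_support_def mu.meas_empty)

lemma infsum_layers_from:
  "(\<Sum>\<^sub>\<infinity>l\<in>{k..}. \<mu> (layer l)) = (\<Sum>l\<in>layer_support. if k \<le> l then \<mu> (layer l) else 0)"
proof -
  have "((\<lambda>l. \<mu> (layer l)) has_sum (\<Sum>l\<in>layer_support \<inter> {k..}. \<mu> (layer l))) {k..}"
    using finite_layer_support
    by (intro has_sum_finite_neutralI) (auto simp: layer_support_def mu.meas_empty)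
  then show ?thesis
    using finite_layer_support by (simp add: infsumI sum.inter_restrict)
qed

lemma has_sum_dyadic_tail_sum:
  "((\<lambda>k. 2 powr (real_of_int k * p) * (\<Sum>\<^sub>\<infinity>l\<in>{k..}. \<mu> (layer l))) has_sum
    (geometric_const p * dyadic_sum)) UNIV"
proof -
  have "2 powr (real_of_int k * p) * (\<Sum>\<^sub>\<infinity>l\<in>{k..}. \<mu> (layer l))
      = (\<Sum>l\<in>layer_support. \<mu> (layer l) * (if k \<le> l then 2 powr (real_of_int k * p) else 0))" for k
    unfolding infsum_layers_from sum_distrib_left by (intro sum.cong refl) simp
  moreover have "((\<lambda>k. \<Sum>l\<in>layer_support. \<mu> (layer l) * (if k \<le> l then 2 powr (real_of_int k * p) else 0))
      has_sum (\<Sum>l\<in>layer_support. \<mu> (layer l) * (2 powr (real_of_int l * p) * geometric_const p))) UNIV"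
    using finite_layer_support has_sum_dyadic_geometric[OF p_pos]
    by (intro has_sum_sum_finite has_sum_cmult_right)
  moreover have "(\<Sum>l\<in>layer_support. \<mu> (layer l) * (2 powr (real_of_int l * p) * geometric_const p))
      = geometric_const p * dyadic_sum"
    unfolding dyadic_sum_def by (simp add: sum_distrib_left algebra_simps)
  ultimately show ?thesis
    by simp
qed

text \<open>Property (c) bounds \<open>\<mu>(\<ell>(f) > \<lambda>)\<close> for \<open>2\<^sup>k \<le> \<lambda> < 2\<^sup>k\<^sup>+\<^sup>1\<close> by \<open>\<Phi> \<Sum>\<^sub>l\<^sub>\<ge>\<^sub>k \<mu>(E\<^sub>l)\<close>.\<close>

lemma level_le_layer_profile:
  assumes x: "0 < x"
  shows "mu.level f x \<le> (\<Sum>l\<in>layer_support. \<Phi> * \<mu> (layer l) * indicator {0<..<2 powr (real_of_int l + 1)} x)"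
proof -
  obtain k where k: "2 powr real_of_int k \<le> x" "x < 2 powr (real_of_int k + 1)"
    using dyadic_interval[OF x] by blast
  have "mu.level f x \<le> mu.level f (2 powr real_of_int k)"
    using k by (intro mu.level_antimono) auto
  also have "\<dots> \<le> \<mu> (canopy_at k)"
    by (rule level_le_meas_canopy)
  also have "\<dots> \<le> \<Phi> * \<mu> (\<Union>l\<in>{k..}. layer l)"
    using layers_from_subset by (rule cover_union_meas_le)
  also have "(\<Union>l\<in>{k..}. layer l) = (\<Union>l\<in>layer_support \<inter> {k..}. layer l)"
    by (auto simp: layer_support_def)
  also have "\<Phi> * \<mu> (\<Union>l\<in>layer_support \<inter> {k..}. layer l) \<le> \<Phi> * (\<Sum>l\<in>layer_support \<inter> {k..}. \<mu> (layer l))"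
    using finite_layer_support layer_subset \<Phi>_ge_1 by (intro mult_left_mono mu.meas_UN_le) auto
  also have "\<dots> = (\<Sum>l\<in>layer_support. if k \<le> l then \<Phi> * \<mu> (layer l) else 0)"
    using finite_layer_support by (simp add: sum_distrib_left sum.inter_restrict if_distrib cong: if_cong)
  also have "\<dots> \<le> (\<Sum>l\<in>layer_support. \<Phi> * \<mu> (layer l) * indicator {0<..<2 powr (real_of_int l + 1)} x)"
  proof (intro sum_mono)
    fix l
    have "x < 2 powr (real_of_int l + 1)" if "k \<le> l"
    proof -
      have "2 powr (real_of_int k + 1) \<le> 2 powr (real_of_int l + 1)"
        using that by (intro powr_mono) auto
      then show ?thesis
        using k(2) by linarith
    qed
    then show "(if k \<le> l then \<Phi> * \<mu> (layer l) else 0)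
        \<le> \<Phi> * \<mu> (layer l) * indicator {0<..<2 powr (real_of_int l + 1)} x"
      using x \<Phi>_ge_1 mu.meas_nonneg[OF layer_subset[of l]] by (auto simp: indicator_def)
  qed
  finally show ?thesis .
qed

lemma layer_integral_level_le_dyadic_sum:
  "layer_integral p (mu.level f) \<le> \<Phi> * 2 powr p * dyadic_sum"
proof -
  let ?\<phi> = "\<lambda>x. \<Sum>l\<in>layer_support. \<Phi> * \<mu> (layer l) * indicator {0<..<2 powr (real_of_int l + 1)} x"
  have "layer_integral p (mu.level f) \<le> layer_integral p ?\<phi>"
    using finite_layer_support p_pos level_le_layer_profile
    by (intro layer_integral_mono mu.layer_integrable_level layer_integral_step_function) auto
  also have "\<dots> = (\<Sum>l\<in>layer_support. \<Phi> * \<mu> (layer l) * ((2 powr (real_of_int l + 1)) powr p - 0 powr p))"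
    using finite_layer_support p_pos by (intro layer_integral_step_function) auto
  also have "\<dots> = \<Phi> * 2 powr p * dyadic_sum"
    unfolding dyadic_sum_def sum_distrib_left
  proof (intro sum.cong refl)
    fix l
    have "(2 powr (real_of_int l + 1)) powr p = 2 powr (real_of_int l * p) * 2 powr p"
      by (simp add: powr_powr powr_add[symmetric] algebra_simps)
    then show "\<Phi> * \<mu> (layer l) * ((2 powr (real_of_int l + 1)) powr p - 0 powr p)
        = \<Phi> * 2 powr p * (2 powr (real_of_int l * p) * \<mu> (layer l))"
      using p_pos by simp
  qed
  finally show ?thesis .
qed

text \<open>The intervals \<open>(c 2\<^sup>k\<^sup>-\<^sup>1, c 2\<^sup>k)\<close> are disjoint, and on each of them \<open>\<mu>(\<ell>(f) > \<lambda>) \<ge> \<mu>(\<ell>(f) > c 2\<^sup>k)\<close>.\<close>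

lemma level_profile_le_level:
  assumes x: "0 < x"
  shows "(\<Sum>k\<in>layer_support. mu.level f (sel * 2 powr real_of_int k)
      * indicator {sel * 2 powr real_of_int k / 2<..<sel * 2 powr real_of_int k} x) \<le> mu.level f x"
proof -
  let ?y = "\<lambda>k. sel * 2 powr real_of_int k"
  define J where "J = {k \<in> layer_support. ?y k / 2 < x \<and> x < ?y k}"
  have sel: "0 < sel"
    using selection_const_pos K_ge_1 by simp
  have "(\<Sum>k\<in>layer_support. mu.level f (?y k) * indicator {?y k / 2<..<?y k} x)
      = (\<Sum>k\<in>layer_support. if k \<in> J then mu.level f (?y k) else 0)"
    by (intro sum.cong refl) (simp add: J_def indicator_def)
  also have "\<dots> = (\<Sum>k\<in>J. mu.level f (?y k))"
    using finite_layer_support sum.inter_restrict[of layer_support "\<lambda>k. mu.level f (?y k)" J]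
    by (simp add: J_def Int_absorb1)
  finally have sum_J: "(\<Sum>k\<in>layer_support. mu.level f (?y k) * indicator {?y k / 2<..<?y k} x)
      = (\<Sum>k\<in>J. mu.level f (?y k))" .
  have J_lt: False if "k \<in> J" "l \<in> J" "k < l" for k l
  proof -
    have "2 powr (real_of_int k + 1) \<le> 2 powr real_of_int l"
      using that(3) by (intro powr_mono) auto
    then have "?y k \<le> ?y l / 2"
      using sel by (simp add: powr_add field_simps)
    then show False
      using that unfolding J_def by auto
  qed
  show ?thesis
  proof (cases "J = {}")
    case False
    then obtain k where k: "k \<in> J"
      by blast
    then have "J = {k}"
      using J_lt by (metis linorder_neqE empty_iff insertI1 subsetI subset_singletonD)
    moreover have "mu.level f (?y k) \<le> mu.level f x"
      using k x unfolding J_def by (intro mu.level_antimono) auto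
    ultimately show ?thesis
      unfolding sum_J by simp
  qed (use sum_J mu.level_nonneg[of x f] x in simp)
qed

lemma dyadic_sum_le_layer_integral:
  "dyadic_sum \<le> geometric_const p * spars / sel powr p * layer_integral p (mu.level f)"
proof -
  let ?y = "\<lambda>k. sel * 2 powr real_of_int k"
  let ?\<psi> = "\<lambda>x. \<Sum>k\<in>layer_support. mu.level f (?y k) * indicator {?y k / 2<..<?y k} x"
  have sel: "0 < sel"
    using selection_const_pos K_ge_1 by simp
  have G: "1 - 2 powr (- p) = 1 / geometric_const p" "0 < geometric_const p"
    using powr_less_one[of 2 "- p"] p_pos geometric_const_ge_1[OF p_pos] by (simp_all add: geometric_const_def)
  have width: "?y k powr p - (?y k / 2) powr p = sel powr p * 2 powr (real_of_int k * p) / geometric_const p" for k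
  proof -
    have "(?y k / 2) powr p = ?y k powr p * 2 powr (- p)"
      using sel by (simp add: powr_divide powr_minus_divide)
    then have "?y k powr p - (?y k / 2) powr p = ?y k powr p * (1 - 2 powr (- p))"
      by (simp add: algebra_simps)
    moreover have "?y k powr p = sel powr p * 2 powr (real_of_int k * p)"
      using sel by (simp add: powr_mult powr_powr mult.commute)
    ultimately show ?thesis
      unfolding G(1) by simp
  qed
  have "dyadic_sum \<le> (\<Sum>k\<in>layer_support. 2 powr (real_of_int k * p) * (spars * mu.level f (?y k)))"
    unfolding dyadic_sum_def by (intro sum_mono mult_left_mono layer_meas_le_level) auto
  also have "\<dots> = geometric_const p * spars / sel powr p
      * (\<Sum>k\<in>layer_support. mu.level f (?y k) * (?y k powr p - (?y k / 2) powr p))"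
    unfolding width sum_distrib_left using sel G(2) by (intro sum.cong refl) (simp add: field_simps)
  also have "(\<Sum>k\<in>layer_support. mu.level f (?y k) * (?y k powr p - (?y k / 2) powr p)) = layer_integral p ?\<psi>"
    using finite_layer_support p_pos sel by (intro layer_integral_step_function(2)[symmetric]) auto
  also have "geometric_const p * spars / sel powr p * layer_integral p ?\<psi>
      \<le> geometric_const p * spars / sel powr p * layer_integral p (mu.level f)"
    using finite_layer_support p_pos sel level_profile_le_level G(2) sparsity_const_pos[of K q r] K_ge_1
    by (intro mult_left_mono layer_integral_mono mu.layer_integrable_level layer_integral_step_function)
      auto
  finally show ?thesis .
qed

lemma Lout_norm_powr_equiv_dyadic_sum:
  defines "I \<equiv> Lout_norm X \<mu> q p N f powr p" and "C' \<equiv> norm_equiv_const p q r \<Phi> K"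
  shows "I / C' \<le> dyadic_sum" "dyadic_sum \<le> C' * I"
    and "I / C' \<le> geometric_const p * dyadic_sum" "geometric_const p * dyadic_sum \<le> C' * I"
proof -
  define D where "D = geometric_const p * spars / sel powr p"
  have I: "I = layer_integral p (mu.level f)"
    unfolding I_def using p_pos by (rule mu.Lout_norm_powr)
  have upper: "I \<le> \<Phi> * 2 powr p * dyadic_sum"
    unfolding I by (rule layer_integral_level_le_dyadic_sum)
  have lower: "dyadic_sum \<le> D * I"
    unfolding I D_def by (rule dyadic_sum_le_layer_integral)
  have C': "C' = \<Phi> * 2 powr p + geometric_const p * D"
    unfolding C'_def D_def norm_equiv_const_def by (simp add: power2_eq_square)
  have G: "1 \<le> geometric_const p"
    using p_pos by (rule geometric_const_ge_1)
  have nonneg: "0 \<le> I" "0 \<le> D" "0 \<le> dyadic_sum" "0 < \<Phi> * 2 powr p"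
    using mu.layer_integral_level_nonneg[OF p_pos] selection_const_pos[of K q r]
      sparsity_const_pos[of K q r] K_ge_1 G dyadic_sum_nonneg \<Phi>_ge_1
    by (auto simp: I D_def)
  have C'_pos: "0 < C'"
    unfolding C' using nonneg G by (simp add: add_pos_nonneg)
  have "0 \<le> geometric_const p * D * dyadic_sum"
    using nonneg G by simp
  then have "I \<le> C' * dyadic_sum"
    using upper unfolding C' distrib_right by linarith
  then show I_le: "I / C' \<le> dyadic_sum"
    using C'_pos by (simp add: divide_le_eq mult.commute)
  have "geometric_const p * dyadic_sum \<le> geometric_const p * D * I"
    using lower G by (simp add: mult_left_mono mult.assoc)
  also have "\<dots> \<le> C' * I"
    using nonneg unfolding C' by (simp add: distrib_right)
  finally show G_le: "geometric_const p * dyadic_sum \<le> C' * I" .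
  have S_le: "dyadic_sum \<le> geometric_const p * dyadic_sum"
    using G nonneg by (simp add: mult_le_cancel_right1)
  show "dyadic_sum \<le> C' * I"
    using S_le G_le by linarith
  show "I / C' \<le> geometric_const p * dyadic_sum"
    using I_le S_le by linarith
qed

end

theorem proposition3p4:
  fixes p q r \<Phi> K :: real
  assumes "0 < p" "0 < q" "0 < r" "1 \<le> \<Phi>" "1 \<le> K"
  shows "\<exists>C c C'. 0 < C \<and> 0 < c \<and> 0 < C' \<and>
    (\<forall>(X :: 'a set) \<mu> \<nu> w \<E> \<C> f.
       finite X \<and> outer_measure X \<mu> \<and> outer_measure X \<nu> \<and> (\<forall>x\<in>X. 0 < w x)
       \<and> canopy X \<mu> \<nu> \<Phi> K \<E> \<C> \<longrightarrow>
       (let Lnu = Lout_norm X \<nu> r q (Lr_norm X w r);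
            F = (\<lambda>E k. cover_union \<C> (\<Union>l\<in>{k..}. E l))
        in \<exists>E :: int \<Rightarrow> 'a set.
          (\<forall>k. E k \<subseteq> X) \<and> (\<forall>k l. k \<noteq> l \<longrightarrow> E k \<inter> E l = {}) \<and>
          (\<forall>k. (E k \<noteq> {} \<longrightarrow>
                  loc_size \<mu> q Lnu (restr (X - F E (k + 1)) f) (E k) > c * 2 powr real_of_int k)
             \<and> Linf_norm X \<mu> q Lnu (restr (X - F E k) f) \<le> 2 powr real_of_int k
             \<and> super_level X \<mu> q Lnu f (2 powr real_of_int k) \<le> \<mu> (F E k)
             \<and> \<mu> (E k) \<le> C * super_level X \<mu> q Lnu f (c * 2 powr real_of_int k)) \<and>
          (\<lambda>k. 2 powr (real_of_int k * p) * \<mu> (E k)) summable_on UNIV \<and>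
          Lout_norm X \<mu> q p Lnu f powr p / C'
            \<le> (\<Sum>\<^sub>\<infinity>k. 2 powr (real_of_int k * p) * \<mu> (E k)) \<and>
          (\<Sum>\<^sub>\<infinity>k. 2 powr (real_of_int k * p) * \<mu> (E k))
            \<le> C' * Lout_norm X \<mu> q p Lnu f powr p \<and>
          (\<lambda>k. 2 powr (real_of_int k * p) * (\<Sum>\<^sub>\<infinity>l\<in>{k..}. \<mu> (E l))) summable_on UNIV \<and>
          Lout_norm X \<mu> q p Lnu f powr p / C'
            \<le> (\<Sum>\<^sub>\<infinity>k. 2 powr (real_of_int k * p) * (\<Sum>\<^sub>\<infinity>l\<in>{k..}. \<mu> (E l))) \<and>
          (\<Sum>\<^sub>\<infinity>k. 2 powr (real_of_int k * p) * (\<Sum>\<^sub>\<infinity>l\<in>{k..}. \<mu> (E l)))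
            \<le> C' * Lout_norm X \<mu> q p Lnu f powr p))"
proof -
  have constants: "0 < sparsity_const q r K" "0 < selection_const q r K" "0 < norm_equiv_const p q r \<Phi> K"
    using assms by (auto intro: sparsity_const_pos selection_const_pos norm_equiv_const_pos)
  show ?thesis
    apply (rule exI[of _ "sparsity_const q r K"], rule exI[of _ "selection_const q r K"],
        rule exI[of _ "norm_equiv_const p q r \<Phi> K"])
    apply (intro conjI allI impI constants)
    subgoal premises hyps for X \<mu> \<nu> w \<E> \<C> f
    proof -
      interpret canopy_setting X \<mu> \<nu> w \<E> \<C> f p q r \<Phi> K
        using hyps assms by unfold_locales auto
      have "(\<Sum>\<^sub>\<infinity>k. 2 powr (real_of_int k * p) * \<mu> (layer k)) = dyadic_sum"
        "(\<Sum>\<^sub>\<infinity>k. 2 powr (real_of_int k * p) * (\<Sum>\<^sub>\<infinity>l\<in>{k..}. \<mu> (layer l)))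
          = geometric_const p * dyadic_sum"
        using has_sum_dyadic_sum has_sum_dyadic_tail_sum by (auto intro: infsumI)
      then show ?thesis
        unfolding Let_def
        using layer_subset layer_disjoint layer_lsize_gt Linf_outside_canopy_le level_le_meas_canopy
          layer_meas_le_level has_sum_dyadic_sum has_sum_dyadic_tail_sum
          Lout_norm_powr_equiv_dyadic_sum
        by (intro exI[of _ layer] conjI allI impI) (auto intro: has_sum_imp_summable)
    qed
    done
qed

end
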